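(* Let $x_1<x_2$, $u_0\in C^4([x_1,x_2])$, $u_1\in C^3([x_1,x_2])$. For $\tilde\delta,\tilde M>0$ let $\widetilde D_{\tilde\delta}=\{(x,t):0\le t\le\tilde\delta,\ x_1+\frac23t^3\le x\le x_2-\frac23t^3\}$ and let $\mathcal S_{\tilde\delta}^{\tilde M}$ be the class defined in the context. For $\mathbf F=(r,s,w)^T\in\mathcal S_{\tilde\delta}^{\tilde M}$ define $\widetilde{\mathcal T}(\mathbf F)=(R,S,W)^T$ by \[ R(\eta,\xi)=\int_0^\xi\Big(\frac{r(x_+(t),t)-s(x_+(t),t)}{2t}-2t^2\big(u_1'(x_+(t))+u_0''(x_+(t))t\big)\Big)dt, \] \[ S(\eta,\xi)=\int_0^\xi\Big(\frac{s(x_-(t),t)-r(x_-(t),t)}{2t}+2t^2\big(u_1'(x_-(t))-u_0''(x_-(t))t\big)\Big)dt, \] \[ W(\eta,\xi)=-2\int_0^\xi t\big\{r(x_-(t),t)+u_1(x_-(t))\big\}dt, \] where $(\eta,\xi)\in\widetilde D_{\tilde\delta}$ denotes the point $x=\eta$, $t=\xi$, and $x_\pm(t)=\pm\frac23t^3+\eta\mp\frac23\xi^3$. Then there exist positive constants $\tilde\delta\le\sqrt[3]{\frac{3(x_2-x_1)}{4}}$, $\tilde M$ and $0<\tilde\nu<1$, depending only on the $C^4$ norm of $u_0$ and the $C^3$ norm of $u_1$, such that (1) $\widetilde{\mathcal T}$ maps $\mathcal S_{\tilde\delta}^{\tilde M}$ into $\mathcal S_{\tilde\delta}^{\tilde M}$;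 and (2) for all $\mathbf F,\widehat{\mathbf F}\in\mathcal S_{\tilde\delta}^{\tilde M}$, $d(\widetilde{\mathcal T}(\mathbf F),\widetilde{\mathcal T}(\widehat{\mathbf F}))\le\tilde\nu\, d(\mathbf F,\widehat{\mathbf F})$.
   Context: $\mathcal S_{\tilde\delta}^{\tilde M}$ is the set of continuously differentiable vector functions $\mathbf F=(f_1,f_2,f_3)^T:\widetilde D_{\tilde\delta}\to\mathbb R^3$ such that (P1) $\mathbf F(x,0)=\mathbf F_t(x,0)=0$; (P2) $\|\mathbf F(x,t)/t^2\|_\infty\le\tilde M$; (P3) $\|\partial_x\mathbf F(x,t)/t^2\|_\infty\le\tilde M$; (P4) $\partial_x\mathbf F$ is Lipschitz continuous in $x$ and $\|\partial_{xx}\mathbf F(x,t)/t^2\|_\infty\le\tilde M$, where $\|\cdot\|_\infty$ is the supremum norm on $\widetilde D_{\tilde\delta}$. The weighted metric is $d(\mathbf F,\mathbf G)=\|(f_1-g_1)/t^2\|_\infty+\|(f_2-g_2)/t^2\|_\infty+\|(f_3-g_3)/t^2\|_\infty$. *)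

theory Defs
  imports "HOL-Analysis.Analysis"
begin

definition Dom :: "real \<Rightarrow> real \<Rightarrow> real \<Rightarrow> (real \<times> real) set" where
  "Dom x1 x2 \<delta> = {(x, t). 0 \<le> t \<and> t \<le> \<delta> \<and>
                     x1 + 2/3 * t^3 \<le> x \<and> x \<le> x2 - 2/3 * t^3}"

text \<open>u is C^k on [a,b] with derivatives us 0 = u, us 1, ..., us k
  (one-sided derivatives at the endpoints), us k continuous.\<close>
definition Ck_on :: "nat \<Rightarrow> real \<Rightarrow> real \<Rightarrow> (nat \<Rightarrow> real \<Rightarrow> real) \<Rightarrow> bool" where
  "Ck_on k a b us \<longleftrightarrow> continuous_on {a..b} (us k) \<and>
     (\<forall>j<k. \<forall>x\<in>{a..b}. (us j has_real_derivative us (Suc j) x) (at x within {a..b}))"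

definition Ck_norm_le :: "nat \<Rightarrow> real \<Rightarrow> real \<Rightarrow> (nat \<Rightarrow> real \<Rightarrow> real) \<Rightarrow> real \<Rightarrow> bool" where
  "Ck_norm_le k a b us K \<longleftrightarrow> (\<forall>j\<le>k. \<forall>x\<in>{a..b}. \<bar>us j x\<bar> \<le> K)"

text \<open>Scalar version of the class S (a vector function belongs to S iff each of its
  three components does, the sup norm of a vector being the max of its components).
  f x t is the value at the point (x,t); fx, ft are the partial derivatives.\<close>
definition inS1 :: "real \<Rightarrow> real \<Rightarrow> real \<Rightarrow> real \<Rightarrow> (real \<Rightarrow> real \<Rightarrow> real) \<Rightarrow> bool" where
  "inS1 x1 x2 \<delta> M f \<longleftrightarrow>
    (\<exists>fx ft :: real \<times> real \<Rightarrow> real.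
       continuous_on (Dom x1 x2 \<delta>) fx \<and> continuous_on (Dom x1 x2 \<delta>) ft \<and>
       (\<forall>p\<in>Dom x1 x2 \<delta>.
          ((\<lambda>q. f (fst q) (snd q)) has_derivative (\<lambda>h. fx p * fst h + ft p * snd h))
            (at p within Dom x1 x2 \<delta>)) \<and>
       \<comment> \<open>(P1)\<close>
       (\<forall>x. (x, 0) \<in> Dom x1 x2 \<delta> \<longrightarrow> f x 0 = 0 \<and> ft (x, 0) = 0) \<and>
       \<comment> \<open>(P2)\<close>
       (\<forall>(x, t)\<in>Dom x1 x2 \<delta>. \<bar>f x t\<bar> \<le> M * t^2) \<and>
       \<comment> \<open>(P3)\<close>
       (\<forall>(x, t)\<in>Dom x1 x2 \<delta>. \<bar>fx (x, t)\<bar> \<le> M * t^2) \<and>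
       \<comment> \<open>(P4): d_x f Lipschitz in x with constant M t^2 (i.e. |d_xx f| <= M t^2)\<close>
       (\<forall>x y t. (x, t) \<in> Dom x1 x2 \<delta> \<longrightarrow> (y, t) \<in> Dom x1 x2 \<delta> \<longrightarrow>
            \<bar>fx (x, t) - fx (y, t)\<bar> \<le> M * t^2 * \<bar>x - y\<bar>))"

definition inS :: "real \<Rightarrow> real \<Rightarrow> real \<Rightarrow> real \<Rightarrow>
    (real \<Rightarrow> real \<Rightarrow> real) \<Rightarrow> (real \<Rightarrow> real \<Rightarrow> real) \<Rightarrow> (real \<Rightarrow> real \<Rightarrow> real) \<Rightarrow> bool" where
  "inS x1 x2 \<delta> M f1 f2 f3 \<longleftrightarrow> inS1 x1 x2 \<delta> M f1 \<and> inS1 x1 x2 \<delta> M f2 \<and> inS1 x1 x2 \<delta> M f3"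

text \<open>Weighted sup distance of one component: sup over D of |f - g| / t^2
  (at t = 0 the quotient is 0/0 = 0 in HOL, consistent with (P1)).\<close>
definition dist1 :: "real \<Rightarrow> real \<Rightarrow> real \<Rightarrow> (real \<Rightarrow> real \<Rightarrow> real) \<Rightarrow> (real \<Rightarrow> real \<Rightarrow> real) \<Rightarrow> real" where
  "dist1 x1 x2 \<delta> f g = (SUP p\<in>Dom x1 x2 \<delta>. \<bar>f (fst p) (snd p) - g (fst p) (snd p)\<bar> / (snd p)^2)"

definition dS :: "real \<Rightarrow> real \<Rightarrow> real \<Rightarrow>
    (real \<Rightarrow> real \<Rightarrow> real) \<times> (real \<Rightarrow> real \<Rightarrow> real) \<times> (real \<Rightarrow> real \<Rightarrow> real) \<Rightarrow>
    (real \<Rightarrow> real \<Rightarrow> real) \<times> (real \<Rightarrow> real \<Rightarrow> real) \<times> (real \<Rightarrow> real \<Rightarrow> real) \<Rightarrow> real" where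
  "dS x1 x2 \<delta> F G = (case F of (f1, f2, f3) \<Rightarrow> case G of (g1, g2, g3) \<Rightarrow>
      dist1 x1 x2 \<delta> f1 g1 + dist1 x1 x2 \<delta> f2 g2 + dist1 x1 x2 \<delta> f3 g3)"

text \<open>The operator T~. U0 j = j-th derivative of u0, U1 j = j-th derivative of u1.
  x_plus/x_minus are the characteristics through (eta, xi).\<close>
definition x_plus :: "real \<Rightarrow> real \<Rightarrow> real \<Rightarrow> real" where
  "x_plus \<eta> \<xi> t = 2/3 * t^3 + \<eta> - 2/3 * \<xi>^3"

definition x_minus :: "real \<Rightarrow> real \<Rightarrow> real \<Rightarrow> real" where
  "x_minus \<eta> \<xi> t = - 2/3 * t^3 + \<eta> + 2/3 * \<xi>^3"

definition opR :: "(nat \<Rightarrow> real \<Rightarrow> real) \<Rightarrow> (nat \<Rightarrow> real \<Rightarrow> real) \<Rightarrow>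
    (real \<Rightarrow> real \<Rightarrow> real) \<Rightarrow> (real \<Rightarrow> real \<Rightarrow> real) \<Rightarrow> real \<Rightarrow> real \<Rightarrow> real" where
  "opR U0 U1 r s \<eta> \<xi> = integral {0..\<xi>} (\<lambda>t.
      (r (x_plus \<eta> \<xi> t) t - s (x_plus \<eta> \<xi> t) t) / (2 * t)
      - 2 * t^2 * (U1 1 (x_plus \<eta> \<xi> t) + U0 2 (x_plus \<eta> \<xi> t) * t))"

definition opS :: "(nat \<Rightarrow> real \<Rightarrow> real) \<Rightarrow> (nat \<Rightarrow> real \<Rightarrow> real) \<Rightarrow>
    (real \<Rightarrow> real \<Rightarrow> real) \<Rightarrow> (real \<Rightarrow> real \<Rightarrow> real) \<Rightarrow> real \<Rightarrow> real \<Rightarrow> real" where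
  "opS U0 U1 r s \<eta> \<xi> = integral {0..\<xi>} (\<lambda>t.
      (s (x_minus \<eta> \<xi> t) t - r (x_minus \<eta> \<xi> t) t) / (2 * t)
      + 2 * t^2 * (U1 1 (x_minus \<eta> \<xi> t) - U0 2 (x_minus \<eta> \<xi> t) * t))"

definition opW :: "(nat \<Rightarrow> real \<Rightarrow> real) \<Rightarrow> (real \<Rightarrow> real \<Rightarrow> real) \<Rightarrow> real \<Rightarrow> real \<Rightarrow> real" where
  "opW U1 r \<eta> \<xi> = - 2 * integral {0..\<xi>} (\<lambda>t. t * (r (x_minus \<eta> \<xi> t) t + U1 0 (x_minus \<eta> \<xi> t)))"

end

theory Submission
  imports Defs
begin

text \<open>
  Substituting t = xi * s turns the three components of the operator into integrals over the
  fixed interval [0, 1] that depend on the point (eta, xi). Each is a combination of two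
  integrals along a characteristic x(t) through (eta, xi): the singular integral of
  f(x(t), t) / t, applied to (r - s)/2, (s - r)/2 or t^2 r, and the regular integral of
  t^n a(x(t)), applied to derivatives of the data. Differentiating under the integral sign, the
  singular integral maps the class with constant M into the class with constant M/2, because the
  bound |f| <= M t^2 absorbs the weight 1/t, while the regular one lands in the class with
  constant L delta^(n-1)/2 when a has C^2 norm at most L. For delta <= 1/2 and M >= 2K all three
  components therefore stay in the class with constant M. The data terms cancel in differences,
  so R and S contract by 1/4 in d(r, r') + d(s, s') and W by delta^2 <= 1/4 in d(r, r'), which
  gives the contraction factor 3/4.
\<close>

section \<open>Parametric integrals and C^k functions\<close>

lemma continuous_on_section:
  assumes "continuous_on (D \<times> S) (\<lambda>(q, s). \<Phi> q s)" "q \<in> D"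
  shows "continuous_on S (\<Phi> q)"
proof (rule continuous_on_compose2[OF assms(1), where f="\<lambda>s. (q, s)", unfolded split_beta fst_conv snd_conv])
  show "continuous_on S (\<lambda>s. (q, s))" by (intro continuous_intros)
  show "(\<lambda>s. (q, s)) ` S \<subseteq> D \<times> S" using assms(2) by auto
qed

lemma abs_integral_le_half:
  fixes g :: "real \<Rightarrow> real"
  assumes "\<And>s. s \<in> {0..1} \<Longrightarrow> \<bar>g s\<bar> \<le> c * s"
  shows "\<bar>integral {0..1} g\<bar> \<le> c / 2"
proof (cases "g integrable_on {0..1}")
  case True
  have "norm (integral {0..1} g) \<le> integral {0..1} (\<lambda>s. c * s)"
  proof (rule integral_norm_bound_integral[OF True])
    show "(\<lambda>s. c * s) integrable_on {0..1}"
      by (intro integrable_continuous_real continuous_intros)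
  qed (use assms in simp)
  also have "\<dots> = c / 2"
    by (simp add: power2_eq_square)
  finally show ?thesis by simp
next
  case False
  with assms[of 1] show ?thesis by (simp add: not_integrable_integral)
qed

lemma integral_rescale_unit:
  fixes h :: "real \<Rightarrow> real"
  assumes "0 \<le> \<xi>"
  shows "integral {0..\<xi>} h = integral {0..1} (\<lambda>s. \<xi> * h (\<xi> * s))"
proof (cases "\<xi> = 0")
  case False
  with assms have "(\<lambda>x. x / \<xi>) ` {0..\<xi>} = {0..1}"
    by (auto simp: image_iff field_simps intro!: bexI[where x="\<xi> * x" for x])
  with integral_stretch_real[OF False, of 0 \<xi> h] False assms show ?thesis
    by simp
qed simp

lemma integral_lincomb3:
  fixes f g h :: "real \<Rightarrow> real"
  assumes "f integrable_on S" "g integrable_on S" "h integrable_on S"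
  shows "integral S (\<lambda>x. f x + b * g x + c * h x) = integral S f + b * integral S g + c * integral S h"
proof -
  have "(\<lambda>x. b * g x) integrable_on S" "(\<lambda>x. c * h x) integrable_on S"
    using integrable_on_cmult_left[OF assms(2), of b] integrable_on_cmult_left[OF assms(3), of c]
    by simp_all
  with assms show ?thesis
    by (simp add: integral_add integrable_add)
qed

lemma abs_divide_le_of_le_sq:
  fixes F s c :: real
  assumes "\<bar>F\<bar> \<le> c * s^2" "0 \<le> s"
  shows "\<bar>F / s\<bar> \<le> c * s"
proof (cases "s = 0")
  case False
  with assms have "\<bar>F\<bar> / s \<le> c * s^2 / s" by (simp add: divide_right_mono)
  with False assms(2) show ?thesis by (simp add: power2_eq_square)
qed simp

lemma continuous_on_divide_param:
  fixes k :: "'a::t2_space \<Rightarrow> real \<Rightarrow> real"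
  assumes cont: "continuous_on (S \<times> T) (\<lambda>(q, s). k q s)"
    and bound: "\<And>q s. q \<in> S \<Longrightarrow> s \<in> T \<Longrightarrow> \<bar>k q s\<bar> \<le> c * s^2"
  shows "continuous_on (S \<times> T) (\<lambda>(q, s). k q s / s)"
  unfolding continuous_on_eq_continuous_within
proof (intro ballI)
  fix p assume p: "p \<in> S \<times> T"
  have k_lim: "((\<lambda>(q, s). k q s) \<longlongrightarrow> (\<lambda>(q, s). k q s) p) (at p within S \<times> T)"
    using cont p unfolding continuous_on_def by blast
  have s_lim: "(snd \<longlongrightarrow> snd p) (at p within S \<times> T)"
    using tendsto_snd[OF tendsto_ident_at] .
  show "continuous (at p within S \<times> T) (\<lambda>(q, s). k q s / s)"
  proof (cases "snd p = 0")
    case False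
    then show ?thesis
      using tendsto_divide[OF k_lim s_lim False] by (simp add: continuous_within split_beta')
  next
    case True
    have "((\<lambda>(q, s). k q s / s) \<longlongrightarrow> 0) (at p within S \<times> T)"
    proof (rule Lim_null_comparison)
      show "\<forall>\<^sub>F x in at p within S \<times> T. norm ((\<lambda>(q, s). k q s / s) x) \<le> c * \<bar>snd x\<bar>"
        unfolding eventually_at_filter
      proof (intro always_eventually allI impI)
        fix x :: "'a \<times> real" assume "x \<in> S \<times> T"
        then have "\<bar>k (fst x) (snd x)\<bar> \<le> c * \<bar>snd x\<bar> * \<bar>snd x\<bar>"
          using bound[of "fst x" "snd x"] by (auto simp: power2_eq_square mult.assoc)
        then show "norm ((\<lambda>(q, s). k q s / s) x) \<le> c * \<bar>snd x\<bar>"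
          by (cases "snd x = 0") (auto simp: split_beta divide_le_eq)
      qed
      show "((\<lambda>x. c * \<bar>snd x\<bar>) \<longlongrightarrow> 0) (at p within S \<times> T)"
        using tendsto_mult[OF tendsto_const[of c] tendsto_rabs[OF s_lim]] True by simp
    qed
    then show ?thesis
      using True by (simp add: continuous_within split_beta')
  qed
qed

lemma has_derivative_integral_param:
  fixes \<Phi> A B :: "real \<times> real \<Rightarrow> real \<Rightarrow> real"
  assumes "convex D" "p \<in> D"
    and der: "\<And>q s. q \<in> D \<Longrightarrow> s \<in> {0..1} \<Longrightarrow>
        ((\<lambda>q. \<Phi> q s) has_derivative (\<lambda>h. A q s * fst h + B q s * snd h)) (at q within D)"
    and cont_\<Phi>: "continuous_on (D \<times> {0..1}) (\<lambda>(q, s). \<Phi> q s)"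
    and cont_A: "continuous_on (D \<times> {0..1}) (\<lambda>(q, s). A q s)"
    and cont_B: "continuous_on (D \<times> {0..1}) (\<lambda>(q, s). B q s)"
  shows "((\<lambda>q. integral {0..1} (\<Phi> q)) has_derivative
     (\<lambda>h. integral {0..1} (A p) * fst h + integral {0..1} (B p) * snd h)) (at p within D)"
proof -
  define L where "L q s = A q s *\<^sub>R (fst_blinfun :: (real \<times> real) \<Rightarrow>\<^sub>L real) + B q s *\<^sub>R snd_blinfun" for q s
  have L_apply: "blinfun_apply (L q s) = (\<lambda>h. A q s * fst h + B q s * snd h)" for q s
    by (simp add: fun_eq_iff L_def blinfun.scaleR_left plus_blinfun.rep_eq)
  have cont_L: "continuous_on (D \<times> cbox 0 1) (\<lambda>(q, s). L q s)"
    using cont_A cont_B unfolding L_def split_beta' by (intro continuous_intros) auto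
  have "((\<lambda>q. integral (cbox 0 1) (\<Phi> q)) has_derivative blinfun_apply (integral (cbox 0 1) (L p)))
      (at p within D)"
  proof (rule leibniz_rule[OF _ _ cont_L assms(2,1)])
    show "\<Phi> q integrable_on cbox 0 1" if "q \<in> D" for q
      using continuous_on_section[OF cont_\<Phi> that] by (simp add: integrable_continuous_real)
  qed (use der in \<open>auto simp: L_apply\<close>)
  moreover have "blinfun_apply (integral (cbox 0 1) (L p))
      = (\<lambda>h. integral {0..1} (A p) * fst h + integral {0..1} (B p) * snd h)"
  proof
    fix h
    have "L p integrable_on cbox 0 1"
      using continuous_on_section[OF cont_L assms(2)] by (rule integrable_continuous)
    then have "blinfun_apply (integral (cbox 0 1) (L p)) h
        = integral {0..1} (\<lambda>s. A p s * fst h + B p s * snd h)"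
      by (simp add: blinfun_apply_integral L_apply)
    also have "\<dots> = integral {0..1} (A p) * fst h + integral {0..1} (B p) * snd h"
      using continuous_on_section[OF cont_A assms(2)] continuous_on_section[OF cont_B assms(2)]
      by (simp add: integral_add integrable_continuous_real integrable_on_mult_left)
    finally show "blinfun_apply (integral (cbox 0 1) (L p)) h
      = integral {0..1} (A p) * fst h + integral {0..1} (B p) * snd h" .
  qed
  ultimately show ?thesis by simp
qed

lemma pow_weight_le:
  fixes t s \<delta> :: real
  assumes "0 \<le> t" "t \<le> \<delta>" "s \<in> {0..1}" "1 \<le> n"
  shows "t^(n + 1) * s^n \<le> \<delta>^(n - 1) * t^2 * s"
proof -
  have "t^(n - 1) * s^n \<le> \<delta>^(n - 1) * s"
    using assms power_decreasing[of 1 n s] by (intro mult_mono power_mono) auto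
  then have "t^2 * (t^(n - 1) * s^n) \<le> t^2 * (\<delta>^(n - 1) * s)"
    by (rule mult_left_mono) simp
  moreover have "t^(n + 1) = t^2 * t^(n - 1)"
    using assms(4) by (simp flip: power_add)
  ultimately show ?thesis
    by (simp add: mult_ac)
qed

lemma Ck_on_continuous_on:
  assumes "Ck_on k a b us" "j \<le> k"
  shows "continuous_on {a..b} (us j)"
proof (cases "j = k")
  case False
  with assms show ?thesis
    by (intro DERIV_continuous_on[of "{a..b}" "us j" "us (Suc j)"]) (auto simp: Ck_on_def)
qed (use assms in \<open>simp add: Ck_on_def\<close>)

lemma Ck_on_lipschitz:
  assumes "Ck_on k a b us" "Ck_norm_le k a b us L" "j < k" "x \<in> {a..b}" "y \<in> {a..b}"
  shows "\<bar>us j x - us j y\<bar> \<le> L * \<bar>x - y\<bar>"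
  using field_differentiable_bound[of "{a..b}" "us j" "us (Suc j)" L x y] assms
  by (auto simp: Ck_on_def Ck_norm_le_def)

lemma Ck_on_shift:
  assumes "Ck_on n a b us" "m + k \<le> n"
  shows "Ck_on m a b (\<lambda>j. us (j + k))"
  using assms Ck_on_continuous_on[OF assms(1), of "m + k"] by (auto simp: Ck_on_def)

lemma Ck_norm_le_shift:
  assumes "Ck_norm_le n a b us K" "m + k \<le> n"
  shows "Ck_norm_le m a b (\<lambda>j. us (j + k)) K"
  using assms by (auto simp: Ck_norm_le_def)

section \<open>The domain and its characteristics\<close>

lemma Dom_convex: "convex (Dom x1 x2 \<delta>)"
  unfolding convex_alt
proof clarify
  fix x t y u v :: real
  assume xt: "(x, t) \<in> Dom x1 x2 \<delta>" and yu: "(y, u) \<in> Dom x1 x2 \<delta>" and v: "0 \<le> v" "v \<le> 1"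
  define T where "T = (1 - v) * t + v * u"
  have cube: "2/3 * T^3 \<le> (1 - v) * (2/3 * t^3) + v * (2/3 * u^3)"
    using convex_onD[OF convex_power_odd[of 3], of v t u] xt yu v by (simp add: Dom_def T_def)
  have "0 \<le> T"
    unfolding T_def using xt yu v by (intro add_nonneg_nonneg mult_nonneg_nonneg) (auto simp: Dom_def)
  moreover have "T \<le> \<delta>"
    using xt yu v mult_left_mono[of t \<delta> "1 - v"] mult_left_mono[of u \<delta> v]
    by (auto simp: Dom_def T_def algebra_simps)
  moreover have "x1 + 2/3 * T^3 \<le> (1 - v) * x + v * y"
  proof -
    have "x1 + 2/3 * T^3 \<le> (1 - v) * (x1 + 2/3 * t^3) + v * (x1 + 2/3 * u^3)"
      using cube by (simp add: algebra_simps)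
    also have "\<dots> \<le> (1 - v) * x + v * y"
      using xt yu v by (intro add_mono mult_left_mono) (auto simp: Dom_def)
    finally show ?thesis .
  qed
  moreover have "(1 - v) * x + v * y \<le> x2 - 2/3 * T^3"
  proof -
    have "(1 - v) * x + v * y \<le> (1 - v) * (x2 - 2/3 * t^3) + v * (x2 - 2/3 * u^3)"
      using xt yu v by (intro add_mono mult_left_mono) (auto simp: Dom_def)
    also have "\<dots> \<le> x2 - 2/3 * T^3"
      using cube by (simp add: algebra_simps)
    finally show ?thesis .
  qed
  ultimately have "((1 - v) * x + v * y, T) \<in> Dom x1 x2 \<delta>"
    unfolding Dom_def by simp
  then show "(1 - v) *\<^sub>R (x, t) + v *\<^sub>R (y, u) \<in> Dom x1 x2 \<delta>"
    by (simp add: T_def)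
qed

lemma Dom_imp_interval:
  assumes "(x, t) \<in> Dom x1 x2 \<delta>"
  shows "x \<in> {x1..x2}"
proof -
  have "0 \<le> t^3" "x1 + 2/3 * t^3 \<le> x" "x \<le> x2 - 2/3 * t^3"
    using assms by (simp_all add: Dom_def)
  then show ?thesis unfolding atLeastAtMost_iff by linarith
qed

definition char_path :: "real \<Rightarrow> real \<Rightarrow> real \<Rightarrow> real \<Rightarrow> real" where
  "char_path \<sigma> \<eta> \<xi> t = \<eta> + \<sigma> * (2/3 * t^3 - 2/3 * \<xi>^3)"

lemma x_plus_eq_char_path: "x_plus = char_path 1"
  by (simp add: fun_eq_iff x_plus_def char_path_def)

lemma x_minus_eq_char_path: "x_minus = char_path (-1)"
  by (simp add: fun_eq_iff x_minus_def char_path_def)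

lemma char_path_in_Dom:
  assumes "\<bar>\<sigma>\<bar> \<le> 1" "(\<eta>, \<xi>) \<in> Dom x1 x2 \<delta>" "0 \<le> t" "t \<le> \<xi>"
  shows "(char_path \<sigma> \<eta> \<xi> t, t) \<in> Dom x1 x2 \<delta>"
proof -
  have "t^3 \<le> \<xi>^3" using assms(3,4) by (simp add: power_mono)
  then have "\<bar>\<sigma> * (2/3 * t^3 - 2/3 * \<xi>^3)\<bar> \<le> 2/3 * \<xi>^3 - 2/3 * t^3"
    using mult_right_mono[OF assms(1), of "2/3 * \<xi>^3 - 2/3 * t^3"] by (simp add: abs_mult)
  with assms(2-4) show ?thesis
    unfolding Dom_def char_path_def by (auto simp: abs_le_iff)
qed

lemma char_point_in_Dom:
  fixes s :: real
  assumes "\<bar>\<sigma>\<bar> \<le> 1" "q \<in> Dom x1 x2 \<delta>" "s \<in> {0..1}"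
  shows "(char_path \<sigma> (fst q) (snd q) (snd q * s), snd q * s) \<in> Dom x1 x2 \<delta>"
proof -
  have "0 \<le> snd q" using assms(2) by (auto simp: Dom_def)
  with assms(3) have "0 \<le> snd q * s" "snd q * s \<le> snd q"
    by (auto simp: mult_right_le_one_le)
  with char_path_in_Dom[OF assms(1), of "fst q" "snd q"] assms(2) show ?thesis
    by simp
qed

lemma char_path_in_interval:
  fixes s :: real
  assumes "\<bar>\<sigma>\<bar> \<le> 1" "q \<in> Dom x1 x2 \<delta>" "s \<in> {0..1}"
  shows "char_path \<sigma> (fst q) (snd q) (snd q * s) \<in> {x1..x2}"
  using Dom_imp_interval[OF char_point_in_Dom[OF assms]] .

lemma has_derivative_char_path:
  "((\<lambda>q. char_path \<sigma> (fst q) (snd q) (snd q * s)) has_derivative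
     (\<lambda>h. fst h + 2 * \<sigma> * (snd q)^2 * (s^3 - 1) * snd h)) (at q within D)"
  unfolding char_path_def
  by (rule has_derivative_eq_rhs, (rule derivative_eq_intros refl)+)
     (simp add: fun_eq_iff algebra_simps power2_eq_square power3_eq_cube)

lemma has_derivative_along_char:
  assumes der: "\<And>p. p \<in> D \<Longrightarrow> ((\<lambda>q. f (fst q) (snd q)) has_derivative
        (\<lambda>h. fx p * fst h + ft p * snd h)) (at p within D)"
    and into: "\<And>q. q \<in> D \<Longrightarrow> (char_path \<sigma> (fst q) (snd q) (snd q * s), snd q * s) \<in> D"
    and "q \<in> D"
  shows "((\<lambda>q. f (char_path \<sigma> (fst q) (snd q) (snd q * s)) (snd q * s)) has_derivative
     (\<lambda>h. fx (char_path \<sigma> (fst q) (snd q) (snd q * s), snd q * s) * (fst h + 2 * \<sigma> * (snd q)^2 * (s^3 - 1) * snd h)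
        + ft (char_path \<sigma> (fst q) (snd q) (snd q * s), snd q * s) * (s * snd h))) (at q within D)"
proof -
  have inner: "((\<lambda>q. (char_path \<sigma> (fst q) (snd q) (snd q * s), snd q * s)) has_derivative
      (\<lambda>h. (fst h + 2 * \<sigma> * (snd q)^2 * (s^3 - 1) * snd h, s * snd h))) (at q within D)"
    by (rule has_derivative_eq_rhs[OF has_derivative_Pair[OF has_derivative_char_path]])
       (auto intro!: derivative_eq_intros simp: fun_eq_iff)
  have "(\<lambda>q. (char_path \<sigma> (fst q) (snd q) (snd q * s), snd q * s)) ` D \<subseteq> D"
    using into by auto
  from has_derivative_in_compose2[OF der this \<open>q \<in> D\<close> inner] show ?thesis
    by simp
qed

lemma has_derivative_along_char_real:
  assumes der: "\<And>x. x \<in> I \<Longrightarrow> (a has_real_derivative a' x) (at x within I)"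
    and into: "\<And>q. q \<in> D \<Longrightarrow> char_path \<sigma> (fst q) (snd q) (snd q * s) \<in> I"
    and "q \<in> D"
  shows "((\<lambda>q. a (char_path \<sigma> (fst q) (snd q) (snd q * s))) has_derivative
     (\<lambda>h. a' (char_path \<sigma> (fst q) (snd q) (snd q * s)) * (fst h + 2 * \<sigma> * (snd q)^2 * (s^3 - 1) * snd h)))
     (at q within D)"
proof -
  have "(\<lambda>q. char_path \<sigma> (fst q) (snd q) (snd q * s)) ` D \<subseteq> I"
    using into by auto
  then show ?thesis
    using has_derivative_in_compose2[of I a "\<lambda>x h. a' x * h", OF _ _ \<open>q \<in> D\<close>
        has_derivative_char_path[of \<sigma> s q D]] der
    by (simp add: has_field_derivative_def)
qed

lemma continuous_on_along_char:
  assumes "continuous_on U g"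
    and "\<And>q s. q \<in> D \<Longrightarrow> s \<in> {0..1} \<Longrightarrow> (char_path \<sigma> (fst q) (snd q) (snd q * s), snd q * s) \<in> U"
  shows "continuous_on (D \<times> {0..1}) (\<lambda>(q, s). g (char_path \<sigma> (fst q) (snd q) (snd q * s), snd q * s))"
  unfolding split_beta'
proof (rule continuous_on_compose2[OF assms(1)])
  show "continuous_on (D \<times> {0..1})
      (\<lambda>p. (char_path \<sigma> (fst (fst p)) (snd (fst p)) (snd (fst p) * snd p), snd (fst p) * snd p))"
    unfolding char_path_def by (intro continuous_intros)
qed (use assms(2) in auto)

lemma continuous_on_along_char_real:
  assumes "continuous_on I a"
    and "\<And>q s. q \<in> D \<Longrightarrow> s \<in> {0..1} \<Longrightarrow> char_path \<sigma> (fst q) (snd q) (snd q * s) \<in> I"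
  shows "continuous_on (D \<times> {0..1}) (\<lambda>(q, s). a (char_path \<sigma> (fst q) (snd q) (snd q * s)))"
  unfolding split_beta'
proof (rule continuous_on_compose2[OF assms(1)])
  show "continuous_on (D \<times> {0..1}) (\<lambda>p. char_path \<sigma> (fst (fst p)) (snd (fst p)) (snd (fst p) * snd p))"
    unfolding char_path_def by (intro continuous_intros)
qed (use assms(2) in auto)

lemma continuous_on_char_quotient:
  fixes g :: "real \<times> real \<Rightarrow> real"
  assumes "\<bar>\<sigma>\<bar> \<le> 1" "continuous_on (Dom x1 x2 \<delta>) g"
    and "\<And>x t. (x, t) \<in> Dom x1 x2 \<delta> \<Longrightarrow> \<bar>g (x, t)\<bar> \<le> M * t^2"
  shows "continuous_on (Dom x1 x2 \<delta> \<times> {0..1})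
    (\<lambda>(q, s). g (char_path \<sigma> (fst q) (snd q) (snd q * s), snd q * s) / s)"
proof (rule continuous_on_divide_param[where c = "\<bar>M\<bar> * \<delta>^2"])
  show "continuous_on (Dom x1 x2 \<delta> \<times> {0..1}) (\<lambda>(q, s). g (char_path \<sigma> (fst q) (snd q) (snd q * s), snd q * s))"
    using continuous_on_along_char[OF assms(2) char_point_in_Dom[OF assms(1)]] .
  fix q and s :: real
  assume q: "q \<in> Dom x1 x2 \<delta>" and s: "s \<in> {0..1}"
  have "M * (snd q * s)^2 \<le> \<bar>M\<bar> * ((snd q)^2 * s^2)"
    by (simp add: power_mult_distrib mult_right_mono)
  also have "\<dots> \<le> \<bar>M\<bar> * (\<delta>^2 * s^2)"
    using q by (intro mult_left_mono mult_right_mono power_mono) (auto simp: Dom_def)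
  finally have "M * (snd q * s)^2 \<le> \<bar>M\<bar> * \<delta>^2 * s^2"
    by (simp add: mult.assoc)
  with assms(3) char_point_in_Dom[OF assms(1) q s]
  show "\<bar>g (char_path \<sigma> (fst q) (snd q) (snd q * s), snd q * s)\<bar> \<le> \<bar>M\<bar> * \<delta>^2 * s^2"
    by fastforce
qed

section \<open>The function class S\<close>

lemma inS1I:
  assumes "continuous_on (Dom x1 x2 \<delta>) fx" "continuous_on (Dom x1 x2 \<delta>) ft"
    and "\<And>p. p \<in> Dom x1 x2 \<delta> \<Longrightarrow> ((\<lambda>q. f (fst q) (snd q)) has_derivative
           (\<lambda>h. fx p * fst h + ft p * snd h)) (at p within Dom x1 x2 \<delta>)"
    and "\<And>x. (x, 0) \<in> Dom x1 x2 \<delta> \<Longrightarrow> f x 0 = 0 \<and> ft (x, 0) = 0"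
    and "\<And>x t. (x, t) \<in> Dom x1 x2 \<delta> \<Longrightarrow> \<bar>f x t\<bar> \<le> M * t^2"
    and "\<And>x t. (x, t) \<in> Dom x1 x2 \<delta> \<Longrightarrow> \<bar>fx (x, t)\<bar> \<le> M * t^2"
    and "\<And>x y t. (x, t) \<in> Dom x1 x2 \<delta> \<Longrightarrow> (y, t) \<in> Dom x1 x2 \<delta> \<Longrightarrow>
           \<bar>fx (x, t) - fx (y, t)\<bar> \<le> M * t^2 * \<bar>x - y\<bar>"
  shows "inS1 x1 x2 \<delta> M f"
  unfolding inS1_def using assms by (intro exI[of _ fx] exI[of _ ft]) auto

lemma inS1E:
  assumes "inS1 x1 x2 \<delta> M f"
  obtains (partials) fx ft where "continuous_on (Dom x1 x2 \<delta>) fx" "continuous_on (Dom x1 x2 \<delta>) ft"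
    and "\<And>p. p \<in> Dom x1 x2 \<delta> \<Longrightarrow> ((\<lambda>q. f (fst q) (snd q)) has_derivative
           (\<lambda>h. fx p * fst h + ft p * snd h)) (at p within Dom x1 x2 \<delta>)"
    and "\<And>x. (x, 0) \<in> Dom x1 x2 \<delta> \<Longrightarrow> f x 0 = 0 \<and> ft (x, 0) = 0"
    and "\<And>x t. (x, t) \<in> Dom x1 x2 \<delta> \<Longrightarrow> \<bar>f x t\<bar> \<le> M * t^2"
    and "\<And>x t. (x, t) \<in> Dom x1 x2 \<delta> \<Longrightarrow> \<bar>fx (x, t)\<bar> \<le> M * t^2"
    and "\<And>x y t. (x, t) \<in> Dom x1 x2 \<delta> \<Longrightarrow> (y, t) \<in> Dom x1 x2 \<delta> \<Longrightarrow>
           \<bar>fx (x, t) - fx (y, t)\<bar> \<le> M * t^2 * \<bar>x - y\<bar>"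
  using assms unfolding inS1_def by blast

lemma inS1_continuous_on:
  assumes "inS1 x1 x2 \<delta> M f"
  shows "continuous_on (Dom x1 x2 \<delta>) (\<lambda>p. f (fst p) (snd p))"
  using assms by (cases rule: inS1E) (rule has_derivative_continuous_on)

lemma inS1_bound:
  assumes "inS1 x1 x2 \<delta> M f" "(x, t) \<in> Dom x1 x2 \<delta>"
  shows "\<bar>f x t\<bar> \<le> M * t^2"
  using assms(1) by (cases rule: inS1E) (use assms(2) in blast)

lemma inS1_vanish:
  assumes "inS1 x1 x2 \<delta> M f" "(x, 0) \<in> Dom x1 x2 \<delta>"
  shows "f x 0 = 0"
  using assms(1) by (cases rule: inS1E) (use assms(2) in blast)

lemma inS1_cong:
  assumes "\<And>x t. (x, t) \<in> Dom x1 x2 \<delta> \<Longrightarrow> f x t = g x t" "inS1 x1 x2 \<delta> M f"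
  shows "inS1 x1 x2 \<delta> M g"
  using assms(2)
proof (cases rule: inS1E)
  case (partials fx ft)
  have "((\<lambda>q. g (fst q) (snd q)) has_derivative (\<lambda>h. fx p * fst h + ft p * snd h))
      (at p within Dom x1 x2 \<delta>)" if "p \<in> Dom x1 x2 \<delta>" for p
    by (rule has_derivative_transform[OF that _ partials(3)[OF that]]) (use assms(1) in auto)
  with partials assms(1) show ?thesis
    by (intro inS1I[of _ _ _ fx ft]) auto
qed

lemma inS1_mono:
  assumes "inS1 x1 x2 \<delta> M f" "M \<le> N"
  shows "inS1 x1 x2 \<delta> N f"
  using assms(1)
proof (cases rule: inS1E)
  case (partials fx ft)
  have "M * t^2 \<le> N * t^2" "M * t^2 * \<bar>x - y\<bar> \<le> N * t^2 * \<bar>x - y\<bar>" for t x y :: real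
    using assms(2) by (simp_all add: mult_right_mono)
  with partials show ?thesis
    by (intro inS1I[of _ _ _ fx ft])
       (auto intro: order_trans[OF partials(5)] order_trans[OF partials(6)] order_trans[OF partials(7)])
qed

lemma inS1_lincomb:
  assumes "inS1 x1 x2 \<delta> M f" "inS1 x1 x2 \<delta> N g"
  shows "inS1 x1 x2 \<delta> (\<bar>a\<bar> * M + \<bar>b\<bar> * N) (\<lambda>x t. a * f x t + b * g x t)"
  using assms(1)
proof (cases rule: inS1E)
  case f: (partials fx ft)
  from assms(2) show ?thesis
  proof (cases rule: inS1E)
    case g: (partials gx gt)
    have triangle: "\<bar>a * u + b * v\<bar> \<le> \<bar>a\<bar> * U + \<bar>b\<bar> * V" if "\<bar>u\<bar> \<le> U" "\<bar>v\<bar> \<le> V" for u v U V :: real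
      using abs_triangle_ineq[of "a * u" "b * v"] mult_left_mono[OF that(1), of "\<bar>a\<bar>"]
        mult_left_mono[OF that(2), of "\<bar>b\<bar>"] by (simp add: abs_mult)
    show ?thesis
    proof (rule inS1I[of _ _ _ "\<lambda>p. a * fx p + b * gx p" "\<lambda>p. a * ft p + b * gt p"])
      show "((\<lambda>q. a * f (fst q) (snd q) + b * g (fst q) (snd q)) has_derivative
          (\<lambda>h. (a * fx p + b * gx p) * fst h + (a * ft p + b * gt p) * snd h)) (at p within Dom x1 x2 \<delta>)"
        if "p \<in> Dom x1 x2 \<delta>" for p
        using has_derivative_add[OF has_derivative_mult_right[OF f(3)[OF that], of a]
            has_derivative_mult_right[OF g(3)[OF that], of b]]
        by (simp add: algebra_simps)
      show "\<bar>(a * fx (x, t) + b * gx (x, t)) - (a * fx (y, t) + b * gx (y, t))\<bar>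
          \<le> (\<bar>a\<bar> * M + \<bar>b\<bar> * N) * t^2 * \<bar>x - y\<bar>"
        if "(x, t) \<in> Dom x1 x2 \<delta>" "(y, t) \<in> Dom x1 x2 \<delta>" for x y t
        using triangle[OF f(7)[OF that] g(7)[OF that]] by (simp add: algebra_simps)
      show "\<bar>a * f x t + b * g x t\<bar> \<le> (\<bar>a\<bar> * M + \<bar>b\<bar> * N) * t^2"
        "\<bar>a * fx (x, t) + b * gx (x, t)\<bar> \<le> (\<bar>a\<bar> * M + \<bar>b\<bar> * N) * t^2"
        if "(x, t) \<in> Dom x1 x2 \<delta>" for x t
        using triangle[OF f(5)[OF that] g(5)[OF that]] triangle[OF f(6)[OF that] g(6)[OF that]]
        by (simp_all add: algebra_simps)
      show "continuous_on (Dom x1 x2 \<delta>) (\<lambda>p. a * fx p + b * gx p)"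
        "continuous_on (Dom x1 x2 \<delta>) (\<lambda>p. a * ft p + b * gt p)"
        by (intro continuous_intros f(1,2) g(1,2))+
    qed (use f(4) g(4) in auto)
  qed
qed

lemma inS1_half_diff:
  assumes "inS1 x1 x2 \<delta> M f" "inS1 x1 x2 \<delta> M g"
  shows "inS1 x1 x2 \<delta> M (\<lambda>x t. (f x t - g x t) / 2)"
  using inS1_cong[OF _ inS1_lincomb[OF assms, of "1/2" "-1/2"]] by (simp add: diff_divide_distrib)

lemma inS1_mult_t_sq:
  assumes "inS1 x1 x2 \<delta> M f" "0 \<le> M"
  shows "inS1 x1 x2 \<delta> (\<delta>^2 * M) (\<lambda>x t. t^2 * f x t)"
  using assms(1)
proof (cases rule: inS1E)
  case (partials fx ft)
  have weight: "t^2 * (M * t^2 * c) \<le> \<delta>^2 * M * t^2 * c" if "(x, t) \<in> Dom x1 x2 \<delta>" "0 \<le> c" for x t c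
  proof -
    have "t^2 \<le> \<delta>^2" using that(1) by (simp add: Dom_def power_mono)
    from mult_right_mono[OF this, of "M * t^2 * c"] show ?thesis
      using assms(2) that(2) by (simp add: mult_ac)
  qed
  show ?thesis
  proof (rule inS1I[of _ _ _ "\<lambda>p. (snd p)^2 * fx p" "\<lambda>p. 2 * snd p * f (fst p) (snd p) + (snd p)^2 * ft p"])
    show "((\<lambda>q. (snd q)^2 * f (fst q) (snd q)) has_derivative
        (\<lambda>h. (snd p)^2 * fx p * fst h + (2 * snd p * f (fst p) (snd p) + (snd p)^2 * ft p) * snd h))
        (at p within Dom x1 x2 \<delta>)" if "p \<in> Dom x1 x2 \<delta>" for p
      by (rule has_derivative_eq_rhs[OF has_derivative_mult[OF _ partials(3)[OF that]]])
         (auto intro!: derivative_eq_intros simp: fun_eq_iff algebra_simps)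
  next
    show "\<bar>t^2 * f x t\<bar> \<le> \<delta>^2 * M * t^2" if "(x, t) \<in> Dom x1 x2 \<delta>" for x t
      using weight[OF that, of 1] mult_left_mono[OF partials(5)[OF that], of "t^2"] by (simp add: abs_mult)
  next
    show "\<bar>(snd (x, t))^2 * fx (x, t)\<bar> \<le> \<delta>^2 * M * t^2" if "(x, t) \<in> Dom x1 x2 \<delta>" for x t
      using weight[OF that, of 1] mult_left_mono[OF partials(6)[OF that], of "t^2"] by (simp add: abs_mult)
  next
    show "\<bar>(snd (x, t))^2 * fx (x, t) - (snd (y, t))^2 * fx (y, t)\<bar> \<le> \<delta>^2 * M * t^2 * \<bar>x - y\<bar>"
      if "(x, t) \<in> Dom x1 x2 \<delta>" "(y, t) \<in> Dom x1 x2 \<delta>" for x y t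
      using weight[OF that(1), of "\<bar>x - y\<bar>"] mult_left_mono[OF partials(7)[OF that], of "t^2"]
      by (simp add: abs_mult right_diff_distrib[symmetric])
  next
    show "continuous_on (Dom x1 x2 \<delta>) (\<lambda>p. (snd p)^2 * fx p)"
      "continuous_on (Dom x1 x2 \<delta>) (\<lambda>p. 2 * snd p * f (fst p) (snd p) + (snd p)^2 * ft p)"
      by (intro continuous_intros partials(1,2) inS1_continuous_on[OF assms(1)])+
  qed (use partials(4) in auto)
qed

lemma inS1_integral_param:
  fixes \<Phi> A B :: "real \<times> real \<Rightarrow> real \<Rightarrow> real"
  assumes der: "\<And>q s. q \<in> Dom x1 x2 \<delta> \<Longrightarrow> s \<in> {0..1} \<Longrightarrow>
        ((\<lambda>q. \<Phi> q s) has_derivative (\<lambda>h. A q s * fst h + B q s * snd h)) (at q within Dom x1 x2 \<delta>)"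
    and cont_\<Phi>: "continuous_on (Dom x1 x2 \<delta> \<times> {0..1}) (\<lambda>(q, s). \<Phi> q s)"
    and cont_A: "continuous_on (Dom x1 x2 \<delta> \<times> {0..1}) (\<lambda>(q, s). A q s)"
    and cont_B: "continuous_on (Dom x1 x2 \<delta> \<times> {0..1}) (\<lambda>(q, s). B q s)"
    and vanish: "\<And>x s. (x, 0) \<in> Dom x1 x2 \<delta> \<Longrightarrow> s \<in> {0..1} \<Longrightarrow> \<Phi> (x, 0) s = 0 \<and> B (x, 0) s = 0"
    and bound: "\<And>x t s. (x, t) \<in> Dom x1 x2 \<delta> \<Longrightarrow> s \<in> {0..1} \<Longrightarrow> \<bar>\<Phi> (x, t) s\<bar> \<le> C * t^2 * s"
    and bound_A: "\<And>x t s. (x, t) \<in> Dom x1 x2 \<delta> \<Longrightarrow> s \<in> {0..1} \<Longrightarrow> \<bar>A (x, t) s\<bar> \<le> C * t^2 * s"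
    and lipschitz_A: "\<And>x y t s. (x, t) \<in> Dom x1 x2 \<delta> \<Longrightarrow> (y, t) \<in> Dom x1 x2 \<delta> \<Longrightarrow> s \<in> {0..1} \<Longrightarrow>
               \<bar>A (x, t) s - A (y, t) s\<bar> \<le> C * t^2 * \<bar>x - y\<bar> * s"
  shows "inS1 x1 x2 \<delta> (C / 2) (\<lambda>\<eta> \<xi>. integral {0..1} (\<Phi> (\<eta>, \<xi>)))"
proof (rule inS1I[of _ _ _ "\<lambda>p. integral {0..1} (A p)" "\<lambda>p. integral {0..1} (B p)"])
  show "continuous_on (Dom x1 x2 \<delta>) (\<lambda>p. integral {0..1} (A p))"
    "continuous_on (Dom x1 x2 \<delta>) (\<lambda>p. integral {0..1} (B p))"
    using integral_continuous_on_param[OF cont_A[folded box_real(2)]]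
      integral_continuous_on_param[OF cont_B[folded box_real(2)]]
    by simp_all
  show "((\<lambda>q. integral {0..1} (\<Phi> (fst q, snd q))) has_derivative
      (\<lambda>h. integral {0..1} (A p) * fst h + integral {0..1} (B p) * snd h)) (at p within Dom x1 x2 \<delta>)"
    if "p \<in> Dom x1 x2 \<delta>" for p
    using has_derivative_integral_param[OF Dom_convex that der cont_\<Phi> cont_A cont_B] by simp
  show "integral {0..1} (\<Phi> (x, 0)) = 0 \<and> integral {0..1} (B (x, 0)) = 0"
    if "(x, 0) \<in> Dom x1 x2 \<delta>" for x
    using vanish[OF that] by (auto intro!: integral_unique[OF has_integral_is_0])
  show "\<bar>integral {0..1} (\<Phi> (x, t))\<bar> \<le> C / 2 * t^2"
    "\<bar>integral {0..1} (A (x, t))\<bar> \<le> C / 2 * t^2" if "(x, t) \<in> Dom x1 x2 \<delta>" for x t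
    using abs_integral_le_half[of "\<Phi> (x, t)" "C * t^2"] abs_integral_le_half[of "A (x, t)" "C * t^2"]
      bound[OF that] bound_A[OF that] by simp_all
  show "\<bar>integral {0..1} (A (x, t)) - integral {0..1} (A (y, t))\<bar> \<le> C / 2 * t^2 * \<bar>x - y\<bar>"
    if "(x, t) \<in> Dom x1 x2 \<delta>" "(y, t) \<in> Dom x1 x2 \<delta>" for x y t
  proof -
    have "integral {0..1} (A (x, t)) - integral {0..1} (A (y, t)) = integral {0..1} (\<lambda>s. A (x, t) s - A (y, t) s)"
      using continuous_on_section[OF cont_A that(1)] continuous_on_section[OF cont_A that(2)]
      by (simp add: integral_diff integrable_continuous_real)
    also have "\<bar>\<dots>\<bar> \<le> C * t^2 * \<bar>x - y\<bar> / 2"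
      by (rule abs_integral_le_half) (rule lipschitz_A[OF that])
    finally show ?thesis by simp
  qed
qed

section \<open>Integrals along characteristics\<close>

text \<open>
  The integrals from 0 to xi of f(x(t), t) / t and of t^n a(x(t)) along the characteristic
  x = char_path sigma eta xi, rescaled by t = xi * s to the fixed interval [0, 1] so that they can be
  differentiated under the integral sign with respect to (eta, xi).
\<close>

definition char_div_integral :: "real \<Rightarrow> (real \<Rightarrow> real \<Rightarrow> real) \<Rightarrow> real \<Rightarrow> real \<Rightarrow> real" where
  "char_div_integral \<sigma> f \<eta> \<xi> = integral {0..1} (\<lambda>s. f (char_path \<sigma> \<eta> \<xi> (\<xi> * s)) (\<xi> * s) / s)"

definition char_pow_integral :: "nat \<Rightarrow> real \<Rightarrow> (real \<Rightarrow> real) \<Rightarrow> real \<Rightarrow> real \<Rightarrow> real" where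
  "char_pow_integral n \<sigma> a \<eta> \<xi> = integral {0..1} (\<lambda>s. \<xi>^(n + 1) * s^n * a (char_path \<sigma> \<eta> \<xi> (\<xi> * s)))"

lemma integrable_char_div_integrand:
  assumes "\<bar>\<sigma>\<bar> \<le> 1" "inS1 x1 x2 \<delta> M f" "(\<eta>, \<xi>) \<in> Dom x1 x2 \<delta>"
  shows "(\<lambda>s. f (char_path \<sigma> \<eta> \<xi> (\<xi> * s)) (\<xi> * s) / s) integrable_on {0..1}"
proof -
  have "continuous_on (Dom x1 x2 \<delta> \<times> {0..1}) (\<lambda>(q, s). f (char_path \<sigma> (fst q) (snd q) (snd q * s)) (snd q * s) / s)"
    using continuous_on_char_quotient[OF assms(1) inS1_continuous_on[OF assms(2)], where M = M]
      inS1_bound[OF assms(2)] by simp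
  from continuous_on_section[OF this assms(3)] show ?thesis
    by (simp add: integrable_continuous_real)
qed

lemma integrable_char_pow_integrand:
  assumes "\<bar>\<sigma>\<bar> \<le> 1" "continuous_on {x1..x2} a" "(\<eta>, \<xi>) \<in> Dom x1 x2 \<delta>"
  shows "(\<lambda>s. \<xi>^(n + 1) * s^n * a (char_path \<sigma> \<eta> \<xi> (\<xi> * s))) integrable_on {0..1}"
proof -
  have "continuous_on (Dom x1 x2 \<delta> \<times> {0..1}) (\<lambda>(q, s). a (char_path \<sigma> (fst q) (snd q) (snd q * s)))"
    by (rule continuous_on_along_char_real[OF assms(2) char_path_in_interval[OF assms(1)]])
  from continuous_on_section[OF this assms(3)] show ?thesis
    by (intro integrable_continuous_real continuous_intros) simp
qed

lemma has_derivative_char_div_integrand: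
  assumes "\<bar>\<sigma>\<bar> \<le> 1" "q \<in> Dom x1 x2 \<delta>" "s \<in> {0..1}"
    and der: "\<And>p. p \<in> Dom x1 x2 \<delta> \<Longrightarrow> ((\<lambda>q. f (fst q) (snd q)) has_derivative
        (\<lambda>h. fx p * fst h + ft p * snd h)) (at p within Dom x1 x2 \<delta>)"
    and vanish: "\<And>x. (x, 0) \<in> Dom x1 x2 \<delta> \<Longrightarrow> ft (x, 0) = 0"
  defines "P \<equiv> (char_path \<sigma> (fst q) (snd q) (snd q * s), snd q * s)"
  shows "((\<lambda>q. f (char_path \<sigma> (fst q) (snd q) (snd q * s)) (snd q * s) / s) has_derivative
    (\<lambda>h. fx P / s * fst h + (2 * \<sigma> * (snd q)^2 * (s^3 - 1) * (fx P / s) + ft P) * snd h))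
    (at q within Dom x1 x2 \<delta>)"
proof (cases "s = 0")
  case True
  \<comment> \<open>the integrand and fx P / s are 0 (division by zero), and ft P = 0 by (P1)\<close>
  with vanish char_point_in_Dom[OF assms(1-3)] have "ft P = 0"
    by (auto simp: P_def)
  with True show ?thesis by simp
next
  case False
  have "((\<lambda>q. f (char_path \<sigma> (fst q) (snd q) (snd q * s)) (snd q * s)) has_derivative
      (\<lambda>h. fx P * (fst h + 2 * \<sigma> * (snd q)^2 * (s^3 - 1) * snd h) + ft P * (s * snd h)))
      (at q within Dom x1 x2 \<delta>)"
    unfolding P_def using has_derivative_along_char[OF der char_point_in_Dom[OF assms(1) _ assms(3)] assms(2)] .
  from has_derivative_mult_right[OF this, of "1 / s"] False show ?thesis
    by (simp add: algebra_simps has_derivative_eq_rhs fun_eq_iff)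
qed

lemma inS1_char_div_integral:
  assumes "\<bar>\<sigma>\<bar> \<le> 1" "inS1 x1 x2 \<delta> M f"
  shows "inS1 x1 x2 \<delta> (M / 2) (char_div_integral \<sigma> f)"
  using assms(2)
proof (cases rule: inS1E)
  case (partials fx ft)
  let ?D = "Dom x1 x2 \<delta>"
  define P where "P q s = (char_path \<sigma> (fst q) (snd q) (snd q * s), snd q * s)" for q s
  define d where "d q s = 2 * \<sigma> * (snd q)^2 * (s^3 - 1)" for q :: "real \<times> real" and s :: real
  define A where "A q s = fx (P q s) / s" for q s
  have P_in: "P q s \<in> ?D" if "q \<in> ?D" "s \<in> {0..1}" for q s
    unfolding P_def using char_point_in_Dom[OF assms(1) that] .
  have P_vanish: "P (x, 0) s = (x, 0)" for x s
    by (simp add: P_def char_path_def)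
  have "inS1 x1 x2 \<delta> (M / 2) (\<lambda>\<eta> \<xi>. integral {0..1} ((\<lambda>q s. f (fst (P q s)) (snd (P q s)) / s) (\<eta>, \<xi>)))"
  proof (rule inS1_integral_param[where A = A and B = "\<lambda>q s. d q s * A q s + ft (P q s)"])
    fix q and s :: real assume "q \<in> ?D" "s \<in> {0..1}"
    from has_derivative_char_div_integrand[OF assms(1) this partials(3)] partials(4)
    show "((\<lambda>q. f (fst (P q s)) (snd (P q s)) / s) has_derivative
        (\<lambda>h. A q s * fst h + (d q s * A q s + ft (P q s)) * snd h)) (at q within ?D)"
      by (simp add: P_def A_def d_def)
  next
    show "continuous_on (?D \<times> {0..1}) (\<lambda>(q, s). f (fst (P q s)) (snd (P q s)) / s)"
      using continuous_on_char_quotient[OF assms(1) inS1_continuous_on[OF assms(2)], where M = M] partials(5)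
      by (simp add: P_def)
    show cont_A: "continuous_on (?D \<times> {0..1}) (\<lambda>(q, s). A q s)"
      using continuous_on_char_quotient[OF assms(1) partials(1,6)] by (simp add: P_def A_def)
    show "continuous_on (?D \<times> {0..1}) (\<lambda>(q, s). d q s * A q s + ft (P q s))"
      using cont_A continuous_on_along_char[OF partials(2) char_point_in_Dom[OF assms(1)]]
      unfolding split_beta' d_def P_def by (intro continuous_intros) auto
  next
    fix x and s :: real assume "(x, 0) \<in> ?D"
    then show "f (fst (P (x, 0) s)) (snd (P (x, 0) s)) / s = 0 \<and> d (x, 0) s * A (x, 0) s + ft (P (x, 0) s) = 0"
      using partials(4) by (simp add: P_vanish d_def)
  next
    fix x t and s :: real assume xt: "(x, t) \<in> ?D" and s: "s \<in> {0..1}"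
    have f_bound: "\<bar>f (fst (P (x, t) s)) (snd (P (x, t) s))\<bar> \<le> M * t^2 * s^2"
      and fx_bound: "\<bar>fx (P (x, t) s)\<bar> \<le> M * t^2 * s^2"
      using partials(5)[of "fst (P (x, t) s)" "snd (P (x, t) s)"] partials(6)[of "fst (P (x, t) s)" "snd (P (x, t) s)"]
        P_in[OF xt s] by (simp_all add: P_def power_mult_distrib mult.assoc)
    with s show "\<bar>f (fst (P (x, t) s)) (snd (P (x, t) s)) / s\<bar> \<le> M * t^2 * s"
      "\<bar>A (x, t) s\<bar> \<le> M * t^2 * s"
      using abs_divide_le_of_le_sq[OF f_bound] abs_divide_le_of_le_sq[OF fx_bound] by (simp_all add: A_def)
  next
    fix x y t and s :: real assume xt: "(x, t) \<in> ?D" and yt: "(y, t) \<in> ?D" and s: "s \<in> {0..1}"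
    have "fst (P (x, t) s) - fst (P (y, t) s) = x - y"
      by (simp add: P_def char_path_def)
    then have lip: "\<bar>fx (P (x, t) s) - fx (P (y, t) s)\<bar> \<le> M * t^2 * \<bar>x - y\<bar> * s^2"
      using partials(7)[of "fst (P (x, t) s)" "t * s" "fst (P (y, t) s)"] P_in[OF xt s] P_in[OF yt s]
      by (simp add: P_def power_mult_distrib mult_ac)
    show "\<bar>A (x, t) s - A (y, t) s\<bar> \<le> M * t^2 * \<bar>x - y\<bar> * s"
      using abs_divide_le_of_le_sq[OF lip] s by (simp add: A_def diff_divide_distrib[symmetric])
  qed
  then show ?thesis
    by (simp add: P_def char_div_integral_def[abs_def])
qed

lemma has_derivative_char_pow_integrand:
  assumes "1 \<le> n" "q \<in> D"
    and der: "\<And>x. x \<in> I \<Longrightarrow> (a has_real_derivative a' x) (at x within I)"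
    and into: "\<And>q. q \<in> D \<Longrightarrow> char_path \<sigma> (fst q) (snd q) (snd q * s) \<in> I"
  defines "X \<equiv> char_path \<sigma> (fst q) (snd q) (snd q * s)"
  shows "((\<lambda>q. (snd q)^(n + 1) * s^n * a (char_path \<sigma> (fst q) (snd q) (snd q * s))) has_derivative
    (\<lambda>h. (snd q)^(n + 1) * s^n * a' X * fst h
      + ((snd q)^(n + 1) * s^n * a' X * (2 * \<sigma> * (snd q)^2 * (s^3 - 1)) + (real n + 1) * (snd q)^n * s^n * a X)
        * snd h)) (at q within D)"
proof -
  have "snd q * snd q ^ (n - 1) = snd q ^ n"
    using assms(1) by (simp flip: power_Suc)
  then show ?thesis
    unfolding X_def
    by (intro has_derivative_eq_rhs[OF has_derivative_mult[OF _ has_derivative_along_char_real[OF der into assms(2)]]])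
       (auto intro!: derivative_eq_intros simp: fun_eq_iff algebra_simps)
qed

lemma inS1_char_pow_integral:
  assumes "\<bar>\<sigma>\<bar> \<le> 1" "1 \<le> n" "Ck_on 2 x1 x2 as" "Ck_norm_le 2 x1 x2 as L"
  shows "inS1 x1 x2 \<delta> (L * \<delta>^(n - 1) / 2) (char_pow_integral n \<sigma> (as 0))"
proof -
  let ?D = "Dom x1 x2 \<delta>"
  define X where "X q s = char_path \<sigma> (fst q) (snd q) (snd q * s)" for q s
  define w where "w q s = (snd q)^(n + 1) * s^n" for q :: "real \<times> real" and s :: real
  define A where "A q s = w q s * as 1 (X q s)" for q s
  have X_in: "X q s \<in> {x1..x2}" if "q \<in> ?D" "s \<in> {0..1}" for q s
    unfolding X_def using char_path_in_interval[OF assms(1) that] .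
  have der_a: "(as 0 has_real_derivative as 1 x) (at x within {x1..x2})" if "x \<in> {x1..x2}" for x
    using assms(3) that by (simp add: Ck_on_def)
  have bound_as: "\<bar>as j x\<bar> \<le> L" if "j \<le> 2" "x \<in> {x1..x2}" for j x
    using assms(4) that by (simp add: Ck_norm_le_def)
  have weighted: "\<bar>w (x, t) s * c\<bar> \<le> L * \<delta>^(n - 1) * t^2 * e * s"
    if "(x, t) \<in> ?D" "s \<in> {0..1}" "\<bar>c\<bar> \<le> L * e" for x t s c e
  proof -
    have "\<bar>w (x, t) s\<bar> \<le> \<delta>^(n - 1) * t^2 * s" "0 \<le> \<delta>^(n - 1) * t^2 * s"
      using pow_weight_le[of t \<delta> s n] that(1,2) assms(2) by (auto simp: w_def Dom_def abs_mult)
    from mult_mono[OF this(1) that(3) this(2) abs_ge_zero] show ?thesis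
      by (simp add: abs_mult mult_ac)
  qed
  have "inS1 x1 x2 \<delta> (L * \<delta>^(n - 1) / 2) (\<lambda>\<eta> \<xi>. integral {0..1} ((\<lambda>q s. w q s * as 0 (X q s)) (\<eta>, \<xi>)))"
  proof (rule inS1_integral_param[where A = A and
        B = "\<lambda>q s. A q s * (2 * \<sigma> * (snd q)^2 * (s^3 - 1)) + (real n + 1) * (snd q)^n * s^n * as 0 (X q s)"])
    fix q and s :: real assume q: "q \<in> ?D" and s: "s \<in> {0..1}"
    from has_derivative_char_pow_integrand[OF assms(2) q der_a, of \<sigma> s] X_in s
    show "((\<lambda>q. w q s * as 0 (X q s)) has_derivative (\<lambda>h. A q s * fst h +
        (A q s * (2 * \<sigma> * (snd q)^2 * (s^3 - 1)) + (real n + 1) * (snd q)^n * s^n * as 0 (X q s)) * snd h))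
        (at q within ?D)"
      by (simp add: w_def A_def X_def)
  next
    have cont_as: "continuous_on (?D \<times> {0..1}) (\<lambda>(q, s). as j (X q s))" if "j \<le> 2" for j
      unfolding X_def
      by (rule continuous_on_along_char_real[OF Ck_on_continuous_on[OF assms(3) that]])
         (use X_in in \<open>simp add: X_def\<close>)
    show "continuous_on (?D \<times> {0..1}) (\<lambda>(q, s). w q s * as 0 (X q s))"
      "continuous_on (?D \<times> {0..1}) (\<lambda>(q, s). A q s)"
      "continuous_on (?D \<times> {0..1}) (\<lambda>(q, s). A q s * (2 * \<sigma> * (snd q)^2 * (s^3 - 1))
         + (real n + 1) * (snd q)^n * s^n * as 0 (X q s))"
      using cont_as[of 0] cont_as[of 1] unfolding w_def A_def split_beta'
      by (intro continuous_intros; simp)+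
  next
    fix x and s :: real assume "(x, 0) \<in> ?D" "s \<in> {0..1}"
    show "w (x, 0) s * as 0 (X (x, 0) s) = 0 \<and>
        A (x, 0) s * (2 * \<sigma> * (snd (x, 0))^2 * (s^3 - 1)) + (real n + 1) * (snd (x, 0))^n * s^n * as 0 (X (x, 0) s) = 0"
      using assms(2) by (simp add: w_def A_def power_0_left)
  next
    fix x t and s :: real assume xt: "(x, t) \<in> ?D" and s: "s \<in> {0..1}"
    show "\<bar>w (x, t) s * as 0 (X (x, t) s)\<bar> \<le> L * \<delta>^(n - 1) * t^2 * s"
      "\<bar>A (x, t) s\<bar> \<le> L * \<delta>^(n - 1) * t^2 * s"
      using weighted[OF xt s, of "as 0 (X (x, t) s)" 1] weighted[OF xt s, of "as 1 (X (x, t) s)" 1]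
        bound_as[OF _ X_in[OF xt s]] by (simp_all add: A_def)
  next
    fix x y t and s :: real assume xt: "(x, t) \<in> ?D" and yt: "(y, t) \<in> ?D" and s: "s \<in> {0..1}"
    have "X (x, t) s - X (y, t) s = x - y"
      by (simp add: X_def char_path_def)
    then have "\<bar>as 1 (X (x, t) s) - as 1 (X (y, t) s)\<bar> \<le> L * \<bar>x - y\<bar>"
      using Ck_on_lipschitz[OF assms(3,4) _ X_in[OF xt s] X_in[OF yt s], of 1] by simp
    from weighted[OF xt s this]
    show "\<bar>A (x, t) s - A (y, t) s\<bar> \<le> L * \<delta>^(n - 1) * t^2 * \<bar>x - y\<bar> * s"
      by (simp add: A_def w_def flip: right_diff_distrib)
  qed
  then show ?thesis
    by (simp add: X_def w_def char_pow_integral_def[abs_def])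
qed

lemma abs_char_div_integral_diff_le:
  assumes "\<bar>\<sigma>\<bar> \<le> 1" "inS1 x1 x2 \<delta> M f" "inS1 x1 x2 \<delta> N g" "(\<eta>, \<xi>) \<in> Dom x1 x2 \<delta>"
    and "\<And>x t. (x, t) \<in> Dom x1 x2 \<delta> \<Longrightarrow> \<bar>f x t - g x t\<bar> \<le> d * t^2"
  shows "\<bar>char_div_integral \<sigma> f \<eta> \<xi> - char_div_integral \<sigma> g \<eta> \<xi>\<bar> \<le> d / 2 * \<xi>^2"
proof -
  let ?X = "\<lambda>s. char_path \<sigma> \<eta> \<xi> (\<xi> * s)"
  have "char_div_integral \<sigma> f \<eta> \<xi> - char_div_integral \<sigma> g \<eta> \<xi>
      = integral {0..1} (\<lambda>s. f (?X s) (\<xi> * s) / s - g (?X s) (\<xi> * s) / s)"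
    unfolding char_div_integral_def
    using integrable_char_div_integrand[OF assms(1,2,4)] integrable_char_div_integrand[OF assms(1,3,4)]
    by (simp add: integral_diff)
  also have "\<bar>\<dots>\<bar> \<le> d * \<xi>^2 / 2"
  proof (rule abs_integral_le_half)
    fix s :: real assume s: "s \<in> {0..1}"
    have "\<bar>f (?X s) (\<xi> * s) - g (?X s) (\<xi> * s)\<bar> \<le> d * \<xi>^2 * s^2"
      using assms(5)[OF char_point_in_Dom[OF assms(1,4) s, simplified]] by (simp add: power_mult_distrib)
    from abs_divide_le_of_le_sq[OF this] s
    show "\<bar>f (?X s) (\<xi> * s) / s - g (?X s) (\<xi> * s) / s\<bar> \<le> d * \<xi>^2 * s"
      by (simp add: diff_divide_distrib)
  qed
  finally show ?thesis by simp
qed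

section \<open>The weighted distance\<close>

lemma bdd_above_dist1:
  assumes "inS1 x1 x2 \<delta> M f" "inS1 x1 x2 \<delta> N g"
  shows "bdd_above ((\<lambda>p. \<bar>f (fst p) (snd p) - g (fst p) (snd p)\<bar> / (snd p)^2) ` Dom x1 x2 \<delta>)"
proof (rule bdd_aboveI2)
  fix p assume "p \<in> Dom x1 x2 \<delta>"
  then obtain x t where p: "p = (x, t)" "(x, t) \<in> Dom x1 x2 \<delta>" by (cases p) auto
  have "\<bar>f x t - g x t\<bar> \<le> (\<bar>M\<bar> + \<bar>N\<bar>) * t^2"
    using inS1_bound[OF assms(1) p(2)] inS1_bound[OF assms(2) p(2)]
      mult_right_mono[OF abs_ge_self[of M], of "t^2"] mult_right_mono[OF abs_ge_self[of N], of "t^2"]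
    by (simp add: distrib_right)
  then show "\<bar>f (fst p) (snd p) - g (fst p) (snd p)\<bar> / (snd p)^2 \<le> \<bar>M\<bar> + \<bar>N\<bar>"
    using p(1) by (cases "t = 0") (simp_all add: divide_le_eq)
qed

lemma abs_diff_le_dist1:
  assumes "inS1 x1 x2 \<delta> M f" "inS1 x1 x2 \<delta> N g" "(x, t) \<in> Dom x1 x2 \<delta>"
  shows "\<bar>f x t - g x t\<bar> \<le> dist1 x1 x2 \<delta> f g * t^2"
proof (cases "t = 0")
  case True
  then show ?thesis
    using inS1_vanish[OF assms(1)] inS1_vanish[OF assms(2)] assms(3) by simp
next
  case False
  have "\<bar>f x t - g x t\<bar> / t^2 \<le> dist1 x1 x2 \<delta> f g"
    unfolding dist1_def using cSUP_upper[OF assms(3) bdd_above_dist1[OF assms(1,2)]] by simp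
  with False show ?thesis by (simp add: divide_le_eq)
qed

lemma dist1_nonneg:
  assumes "inS1 x1 x2 \<delta> M f" "inS1 x1 x2 \<delta> N g" "Dom x1 x2 \<delta> \<noteq> {}"
  shows "0 \<le> dist1 x1 x2 \<delta> f g"
proof -
  obtain p where p: "p \<in> Dom x1 x2 \<delta>" using assms(3) by auto
  have "0 \<le> \<bar>f (fst p) (snd p) - g (fst p) (snd p)\<bar> / (snd p)^2" by simp
  also have "\<dots> \<le> dist1 x1 x2 \<delta> f g"
    unfolding dist1_def by (rule cSUP_upper[OF p bdd_above_dist1[OF assms(1,2)]])
  finally show ?thesis .
qed

lemma dist1_le:
  assumes "Dom x1 x2 \<delta> \<noteq> {}" "0 \<le> c"
    and "\<And>x t. (x, t) \<in> Dom x1 x2 \<delta> \<Longrightarrow> \<bar>f x t - g x t\<bar> \<le> c * t^2"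
  shows "dist1 x1 x2 \<delta> f g \<le> c"
  unfolding dist1_def
proof (rule cSUP_least[OF assms(1)])
  fix p assume "p \<in> Dom x1 x2 \<delta>"
  then obtain x t where p: "p = (x, t)" "(x, t) \<in> Dom x1 x2 \<delta>" by (cases p) auto
  show "\<bar>f (fst p) (snd p) - g (fst p) (snd p)\<bar> / (snd p)^2 \<le> c"
    using assms(2) assms(3)[OF p(2)] p(1) by (cases "t = 0") (simp_all add: divide_le_eq)
qed

lemma dist1_cong:
  assumes "\<And>x t. (x, t) \<in> Dom x1 x2 \<delta> \<Longrightarrow> f x t = f' x t \<and> g x t = g' x t"
  shows "dist1 x1 x2 \<delta> f g = dist1 x1 x2 \<delta> f' g'"
  unfolding dist1_def by (rule SUP_cong) (use assms in auto)

lemma abs_half_diff_le_dist1: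
  assumes "inS1 x1 x2 \<delta> M f" "inS1 x1 x2 \<delta> M g" "inS1 x1 x2 \<delta> M f'" "inS1 x1 x2 \<delta> M g'"
    and "(x, t) \<in> Dom x1 x2 \<delta>"
  shows "\<bar>(f x t - g x t) / 2 - (f' x t - g' x t) / 2\<bar>
    \<le> (dist1 x1 x2 \<delta> f f' + dist1 x1 x2 \<delta> g g') / 2 * t^2"
  using abs_diff_le_dist1[OF assms(1,3,5)] abs_diff_le_dist1[OF assms(2,4,5)]
    abs_triangle_ineq4[of "f x t - f' x t" "g x t - g' x t"]
  by (simp add: field_simps)

lemma dist1_char_div_integral_le:
  assumes "\<bar>\<sigma>\<bar> \<le> 1" "inS1 x1 x2 \<delta> M f" "inS1 x1 x2 \<delta> N g" "Dom x1 x2 \<delta> \<noteq> {}" "0 \<le> d"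
    and "\<And>x t. (x, t) \<in> Dom x1 x2 \<delta> \<Longrightarrow> \<bar>f x t - g x t\<bar> \<le> d * t^2"
  shows "dist1 x1 x2 \<delta> (\<lambda>\<eta> \<xi>. c * char_div_integral \<sigma> f \<eta> \<xi> + p \<eta> \<xi>)
      (\<lambda>\<eta> \<xi>. c * char_div_integral \<sigma> g \<eta> \<xi> + p \<eta> \<xi>) \<le> \<bar>c\<bar> * d / 2"
proof (rule dist1_le[OF assms(4)])
  show "0 \<le> \<bar>c\<bar> * d / 2" using assms(5) by simp
  fix x t assume "(x, t) \<in> Dom x1 x2 \<delta>"
  from mult_left_mono[OF abs_char_div_integral_diff_le[OF assms(1-3) this assms(6)], of "\<bar>c\<bar>"]
  show "\<bar>(c * char_div_integral \<sigma> f x t + p x t) - (c * char_div_integral \<sigma> g x t + p x t)\<bar> \<le> \<bar>c\<bar> * d / 2 * t^2"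
    by (simp add: abs_mult right_diff_distrib[symmetric] mult.assoc)
qed

section \<open>The operator and its contraction property\<close>

lemma opR_eq:
  assumes "(\<eta>, \<xi>) \<in> Dom x1 x2 \<delta>" "inS1 x1 x2 \<delta> M r" "inS1 x1 x2 \<delta> M s"
    and "continuous_on {x1..x2} (U1 1)" "continuous_on {x1..x2} (U0 2)"
  shows "opR U0 U1 r s \<eta> \<xi> = char_div_integral 1 (\<lambda>x t. (r x t - s x t) / 2) \<eta> \<xi>
    - 2 * char_pow_integral 2 1 (U1 1) \<eta> \<xi> - 2 * char_pow_integral 3 1 (U0 2) \<eta> \<xi>"
proof -
  let ?X = "\<lambda>u. char_path 1 \<eta> \<xi> (\<xi> * u)"
  let ?F = "\<lambda>u. r (?X u) (\<xi> * u) - s (?X u) (\<xi> * u)"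
  have "0 \<le> \<xi>" using assms(1) by (simp add: Dom_def)
  then have "opR U0 U1 r s \<eta> \<xi> = integral {0..1} (\<lambda>u. \<xi> * (?F u / (2 * (\<xi> * u))
      - 2 * (\<xi> * u)^2 * (U1 1 (?X u) + U0 2 (?X u) * (\<xi> * u))))"
    unfolding opR_def x_plus_eq_char_path by (rule integral_rescale_unit)
  also have "\<dots> = integral {0..1} (\<lambda>u. ?F u / 2 / u
      + -2 * (\<xi>^3 * u^2 * U1 1 (?X u)) + -2 * (\<xi>^4 * u^3 * U0 2 (?X u)))"
  proof (rule integral_cong)
    fix u :: real assume "u \<in> {0..1}"
    have "\<xi> * (?F u / (2 * (\<xi> * u))) = ?F u / 2 / u"
      using assms(1) inS1_vanish[OF assms(2)] inS1_vanish[OF assms(3)]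
      by (cases "\<xi> = 0"; cases "u = 0") (simp_all add: char_path_def)
    moreover have "\<xi> * (2 * (\<xi> * u)^2 * (U1 1 (?X u) + U0 2 (?X u) * (\<xi> * u)))
        = 2 * (\<xi>^3 * u^2 * U1 1 (?X u)) + 2 * (\<xi>^4 * u^3 * U0 2 (?X u))"
      by algebra
    ultimately show "\<xi> * (?F u / (2 * (\<xi> * u)) - 2 * (\<xi> * u)^2 * (U1 1 (?X u) + U0 2 (?X u) * (\<xi> * u)))
      = ?F u / 2 / u + -2 * (\<xi>^3 * u^2 * U1 1 (?X u)) + -2 * (\<xi>^4 * u^3 * U0 2 (?X u))"
      by (simp add: right_diff_distrib)
  qed
  also have "\<dots> = char_div_integral 1 (\<lambda>x t. (r x t - s x t) / 2) \<eta> \<xi>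
      - 2 * char_pow_integral 2 1 (U1 1) \<eta> \<xi> - 2 * char_pow_integral 3 1 (U0 2) \<eta> \<xi>"
    using integrable_char_div_integrand[OF _ inS1_half_diff[OF assms(2,3)] assms(1), of 1]
      integrable_char_pow_integrand[OF _ assms(4) assms(1), of 1 2]
      integrable_char_pow_integrand[OF _ assms(5) assms(1), of 1 3]
    by (subst integral_lincomb3) (simp_all add: char_div_integral_def char_pow_integral_def)
  finally show ?thesis .
qed

lemma opS_eq:
  assumes "(\<eta>, \<xi>) \<in> Dom x1 x2 \<delta>" "inS1 x1 x2 \<delta> M r" "inS1 x1 x2 \<delta> M s"
    and "continuous_on {x1..x2} (U1 1)" "continuous_on {x1..x2} (U0 2)"
  shows "opS U0 U1 r s \<eta> \<xi> = char_div_integral (-1) (\<lambda>x t. (s x t - r x t) / 2) \<eta> \<xi>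
    + 2 * char_pow_integral 2 (-1) (U1 1) \<eta> \<xi> - 2 * char_pow_integral 3 (-1) (U0 2) \<eta> \<xi>"
proof -
  let ?X = "\<lambda>u. char_path (-1) \<eta> \<xi> (\<xi> * u)"
  let ?F = "\<lambda>u. s (?X u) (\<xi> * u) - r (?X u) (\<xi> * u)"
  have "0 \<le> \<xi>" using assms(1) by (simp add: Dom_def)
  then have "opS U0 U1 r s \<eta> \<xi> = integral {0..1} (\<lambda>u. \<xi> * (?F u / (2 * (\<xi> * u))
      + 2 * (\<xi> * u)^2 * (U1 1 (?X u) - U0 2 (?X u) * (\<xi> * u))))"
    unfolding opS_def x_minus_eq_char_path by (rule integral_rescale_unit)
  also have "\<dots> = integral {0..1} (\<lambda>u. ?F u / 2 / u
      + 2 * (\<xi>^3 * u^2 * U1 1 (?X u)) + -2 * (\<xi>^4 * u^3 * U0 2 (?X u)))"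
  proof (rule integral_cong)
    fix u :: real assume "u \<in> {0..1}"
    have "\<xi> * (?F u / (2 * (\<xi> * u))) = ?F u / 2 / u"
      using assms(1) inS1_vanish[OF assms(2)] inS1_vanish[OF assms(3)]
      by (cases "\<xi> = 0"; cases "u = 0") (simp_all add: char_path_def)
    moreover have "\<xi> * (2 * (\<xi> * u)^2 * (U1 1 (?X u) - U0 2 (?X u) * (\<xi> * u)))
        = 2 * (\<xi>^3 * u^2 * U1 1 (?X u)) + -2 * (\<xi>^4 * u^3 * U0 2 (?X u))"
      by algebra
    ultimately show "\<xi> * (?F u / (2 * (\<xi> * u)) + 2 * (\<xi> * u)^2 * (U1 1 (?X u) - U0 2 (?X u) * (\<xi> * u)))
      = ?F u / 2 / u + 2 * (\<xi>^3 * u^2 * U1 1 (?X u)) + -2 * (\<xi>^4 * u^3 * U0 2 (?X u))"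
      by (simp add: distrib_left)
  qed
  also have "\<dots> = char_div_integral (-1) (\<lambda>x t. (s x t - r x t) / 2) \<eta> \<xi>
      + 2 * char_pow_integral 2 (-1) (U1 1) \<eta> \<xi> - 2 * char_pow_integral 3 (-1) (U0 2) \<eta> \<xi>"
    using integrable_char_div_integrand[OF _ inS1_half_diff[OF assms(3,2)] assms(1), of "-1"]
      integrable_char_pow_integrand[OF _ assms(4) assms(1), of "-1" 2]
      integrable_char_pow_integrand[OF _ assms(5) assms(1), of "-1" 3]
    by (subst integral_lincomb3) (simp_all add: char_div_integral_def char_pow_integral_def)
  finally show ?thesis .
qed

lemma opW_eq:
  assumes "(\<eta>, \<xi>) \<in> Dom x1 x2 \<delta>" "inS1 x1 x2 \<delta> M r" "0 \<le> M" "continuous_on {x1..x2} (U1 0)"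
  shows "opW U1 r \<eta> \<xi> = -2 * char_div_integral (-1) (\<lambda>x t. t^2 * r x t) \<eta> \<xi>
    - 2 * char_pow_integral 1 (-1) (U1 0) \<eta> \<xi>"
proof -
  let ?X = "\<lambda>u. char_path (-1) \<eta> \<xi> (\<xi> * u)"
  have "0 \<le> \<xi>" using assms(1) by (simp add: Dom_def)
  then have "integral {0..\<xi>} (\<lambda>t. t * (r (x_minus \<eta> \<xi> t) t + U1 0 (x_minus \<eta> \<xi> t)))
      = integral {0..1} (\<lambda>u. \<xi> * ((\<xi> * u) * (r (?X u) (\<xi> * u) + U1 0 (?X u))))"
    unfolding x_minus_eq_char_path by (rule integral_rescale_unit)
  also have "\<dots> = integral {0..1} (\<lambda>u. (\<xi> * u)^2 * r (?X u) (\<xi> * u) / u + \<xi>^2 * u * U1 0 (?X u))"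
    by (rule integral_cong) (cases "u = 0"; simp add: field_simps power2_eq_square)
  also have "\<dots> = char_div_integral (-1) (\<lambda>x t. t^2 * r x t) \<eta> \<xi> + char_pow_integral 1 (-1) (U1 0) \<eta> \<xi>"
    using integrable_char_div_integrand[OF _ inS1_mult_t_sq[OF assms(2,3)] assms(1), of "-1"]
      integrable_char_pow_integrand[OF _ assms(4) assms(1), of "-1" 1]
    by (subst integral_add) (simp_all add: char_div_integral_def char_pow_integral_def power2_eq_square)
  finally show ?thesis
    unfolding opW_def by simp
qed

lemma inS1_RS_combination:
  assumes "\<bar>\<sigma>\<bar> \<le> 1" "inS1 x1 x2 \<delta> M f"
    and "Ck_on 2 x1 x2 as" "Ck_norm_le 2 x1 x2 as K" "Ck_on 2 x1 x2 bs" "Ck_norm_le 2 x1 x2 bs K"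
    and "\<bar>c\<bar> \<le> 2" "\<bar>d\<bar> \<le> 2" "0 \<le> \<delta>" "\<delta> \<le> 1/2" "0 \<le> K" "2 * K \<le> M"
  shows "inS1 x1 x2 \<delta> M (\<lambda>\<eta> \<xi>. char_div_integral \<sigma> f \<eta> \<xi>
      + c * char_pow_integral 2 \<sigma> (as 0) \<eta> \<xi> + d * char_pow_integral 3 \<sigma> (bs 0) \<eta> \<xi>)"
proof -
  have comb: "inS1 x1 x2 \<delta> (\<bar>1\<bar> * (\<bar>1\<bar> * (M / 2) + \<bar>c\<bar> * (K * \<delta>^(2 - 1) / 2)) + \<bar>d\<bar> * (K * \<delta>^(3 - 1) / 2))
      (\<lambda>\<eta> \<xi>. 1 * (1 * char_div_integral \<sigma> f \<eta> \<xi> + c * char_pow_integral 2 \<sigma> (as 0) \<eta> \<xi>)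
         + d * char_pow_integral 3 \<sigma> (bs 0) \<eta> \<xi>)"
    by (intro inS1_lincomb inS1_char_div_integral inS1_char_pow_integral assms(1-6)) simp_all
  have "\<bar>c\<bar> * (K * \<delta>) \<le> 2 * (K * (1/2))" "\<bar>d\<bar> * (K * \<delta>^2) \<le> 2 * (K * (1/2)^2)"
    using assms(7-11) by (intro mult_mono power_mono; simp)+
  then have "\<bar>1\<bar> * (\<bar>1\<bar> * (M / 2) + \<bar>c\<bar> * (K * \<delta>^(2 - 1) / 2)) + \<bar>d\<bar> * (K * \<delta>^(3 - 1) / 2) \<le> M"
    using assms(11,12) by (simp add: power2_eq_square)
  from inS1_mono[OF comb this] show ?thesis
    by (rule inS1_cong[rotated]) simp
qed

lemma inS1_W_combination:
  assumes "inS1 x1 x2 \<delta> M r" "Ck_on 2 x1 x2 as" "Ck_norm_le 2 x1 x2 as K"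
    and "0 \<le> \<delta>" "\<delta> \<le> 1/2" "0 \<le> K" "2 * K \<le> M"
  shows "inS1 x1 x2 \<delta> M (\<lambda>\<eta> \<xi>. -2 * char_div_integral (-1) (\<lambda>x t. t^2 * r x t) \<eta> \<xi>
      + -2 * char_pow_integral 1 (-1) (as 0) \<eta> \<xi>)"
proof -
  have "inS1 x1 x2 \<delta> (\<bar>-2\<bar> * (\<delta>^2 * M / 2) + \<bar>-2\<bar> * (K * \<delta>^(1 - 1) / 2))
      (\<lambda>\<eta> \<xi>. -2 * char_div_integral (-1) (\<lambda>x t. t^2 * r x t) \<eta> \<xi> + -2 * char_pow_integral 1 (-1) (as 0) \<eta> \<xi>)"
    using assms(6,7) by (intro inS1_lincomb inS1_char_div_integral inS1_mult_t_sq inS1_char_pow_integral assms(1-3)) simp_all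
  moreover have "\<delta>^2 * M \<le> 1/4 * M"
    using assms(4-7) power_mono[OF assms(5,4), of 2] by (intro mult_right_mono) (auto simp: power2_eq_square)
  ultimately show ?thesis
    using assms(6,7) by (elim inS1_mono) auto
qed

context
  fixes x1 x2 \<delta> M K :: real and U0 U1 :: "nat \<Rightarrow> real \<Rightarrow> real"
  assumes x1_le_x2: "x1 \<le> x2" and \<delta>_pos: "0 < \<delta>" and \<delta>_le: "\<delta> \<le> 1/2"
    and K_nonneg: "0 \<le> K" and M_ge: "2 * K \<le> M"
    and U0: "Ck_on 4 x1 x2 U0" "Ck_norm_le 4 x1 x2 U0 K"
    and U1: "Ck_on 3 x1 x2 U1" "Ck_norm_le 3 x1 x2 U1 K"
begin

lemma coefficients_C2:
  "Ck_on 2 x1 x2 (\<lambda>j. U1 (j + 1))" "Ck_norm_le 2 x1 x2 (\<lambda>j. U1 (j + 1)) K"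
  "Ck_on 2 x1 x2 (\<lambda>j. U0 (j + 2))" "Ck_norm_le 2 x1 x2 (\<lambda>j. U0 (j + 2)) K"
  "Ck_on 2 x1 x2 U1" "Ck_norm_le 2 x1 x2 U1 K"
  using Ck_on_shift[OF U1(1), of 2 1] Ck_norm_le_shift[OF U1(2), of 2 1]
    Ck_on_shift[OF U0(1), of 2 2] Ck_norm_le_shift[OF U0(2), of 2 2]
    Ck_on_shift[OF U1(1), of 2 0] Ck_norm_le_shift[OF U1(2), of 2 0]
  by simp_all

lemma coefficients_continuous:
  "continuous_on {x1..x2} (U1 0)" "continuous_on {x1..x2} (U1 1)" "continuous_on {x1..x2} (U0 2)"
  using Ck_on_continuous_on[OF U1(1), of 0] Ck_on_continuous_on[OF U1(1), of 1]
    Ck_on_continuous_on[OF U0(1), of 2] by simp_all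

lemma Dom_nonempty: "Dom x1 x2 \<delta> \<noteq> {}"
proof -
  have "(x1, 0) \<in> Dom x1 x2 \<delta>" using x1_le_x2 \<delta>_pos by (simp add: Dom_def)
  then show ?thesis by blast
qed

lemma inS1_opR:
  assumes "inS1 x1 x2 \<delta> M r" "inS1 x1 x2 \<delta> M s"
  shows "inS1 x1 x2 \<delta> M (opR U0 U1 r s)"
proof (rule inS1_cong[OF _ inS1_RS_combination[OF _ inS1_half_diff[OF assms] coefficients_C2(1-4)]])
  show "char_div_integral 1 (\<lambda>x t. (r x t - s x t) / 2) x t + -2 * char_pow_integral 2 1 (U1 (0 + 1)) x t
      + -2 * char_pow_integral 3 1 (U0 (0 + 2)) x t = opR U0 U1 r s x t" if "(x, t) \<in> Dom x1 x2 \<delta>" for x t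
    using opR_eq[where ?U0.0 = U0 and ?U1.0 = U1, OF that assms coefficients_continuous(2,3)]
    by (simp add: numeral_2_eq_2)
qed (use \<delta>_pos \<delta>_le K_nonneg M_ge in auto)

lemma inS1_opS:
  assumes "inS1 x1 x2 \<delta> M r" "inS1 x1 x2 \<delta> M s"
  shows "inS1 x1 x2 \<delta> M (opS U0 U1 r s)"
proof (rule inS1_cong[OF _ inS1_RS_combination[OF _ inS1_half_diff[OF assms(2,1)] coefficients_C2(1-4)]])
  show "char_div_integral (-1) (\<lambda>x t. (s x t - r x t) / 2) x t + 2 * char_pow_integral 2 (-1) (U1 (0 + 1)) x t
      + -2 * char_pow_integral 3 (-1) (U0 (0 + 2)) x t = opS U0 U1 r s x t" if "(x, t) \<in> Dom x1 x2 \<delta>" for x t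
    using opS_eq[where ?U0.0 = U0 and ?U1.0 = U1, OF that assms coefficients_continuous(2,3)]
    by (simp add: numeral_2_eq_2)
qed (use \<delta>_pos \<delta>_le K_nonneg M_ge in auto)

lemma inS1_opW:
  assumes "inS1 x1 x2 \<delta> M r"
  shows "inS1 x1 x2 \<delta> M (opW U1 r)"
proof (rule inS1_cong[OF _ inS1_W_combination[OF assms coefficients_C2(5,6)]])
  show "-2 * char_div_integral (-1) (\<lambda>x t. t^2 * r x t) x t + -2 * char_pow_integral 1 (-1) (U1 0) x t
      = opW U1 r x t" if "(x, t) \<in> Dom x1 x2 \<delta>" for x t
    using opW_eq[where ?U1.0 = U1, OF that assms _ coefficients_continuous(1)] K_nonneg M_ge by simp
qed (use \<delta>_pos \<delta>_le K_nonneg M_ge in auto)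

lemma inS_opT:
  assumes "inS x1 x2 \<delta> M r s w"
  shows "inS x1 x2 \<delta> M (opR U0 U1 r s) (opS U0 U1 r s) (opW U1 r)"
  using assms by (simp add: inS_def inS1_opR inS1_opS inS1_opW)

lemma dist1_opR_le:
  assumes "inS1 x1 x2 \<delta> M r" "inS1 x1 x2 \<delta> M s" "inS1 x1 x2 \<delta> M r'" "inS1 x1 x2 \<delta> M s'"
  shows "dist1 x1 x2 \<delta> (opR U0 U1 r s) (opR U0 U1 r' s') \<le> (dist1 x1 x2 \<delta> r r' + dist1 x1 x2 \<delta> s s') / 4"
proof -
  let ?p = "\<lambda>\<eta> \<xi>. - 2 * char_pow_integral 2 1 (U1 1) \<eta> \<xi> - 2 * char_pow_integral 3 1 (U0 2) \<eta> \<xi>"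
  have "dist1 x1 x2 \<delta> (opR U0 U1 r s) (opR U0 U1 r' s')
      = dist1 x1 x2 \<delta> (\<lambda>\<eta> \<xi>. 1 * char_div_integral 1 (\<lambda>x t. (r x t - s x t) / 2) \<eta> \<xi> + ?p \<eta> \<xi>)
          (\<lambda>\<eta> \<xi>. 1 * char_div_integral 1 (\<lambda>x t. (r' x t - s' x t) / 2) \<eta> \<xi> + ?p \<eta> \<xi>)"
    using opR_eq[where ?U0.0 = U0 and ?U1.0 = U1, OF _ assms(1,2) coefficients_continuous(2,3)]
      opR_eq[where ?U0.0 = U0 and ?U1.0 = U1, OF _ assms(3,4) coefficients_continuous(2,3)]
    by (intro dist1_cong) simp
  also have "\<dots> \<le> \<bar>1\<bar> * ((dist1 x1 x2 \<delta> r r' + dist1 x1 x2 \<delta> s s') / 2) / 2"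
    by (rule dist1_char_div_integral_le[OF _ inS1_half_diff[OF assms(1,2)] inS1_half_diff[OF assms(3,4)] Dom_nonempty])
       (use dist1_nonneg[OF assms(1,3) Dom_nonempty] dist1_nonneg[OF assms(2,4) Dom_nonempty]
          abs_half_diff_le_dist1[OF assms] in auto)
  finally show ?thesis by simp
qed

lemma dist1_opS_le:
  assumes "inS1 x1 x2 \<delta> M r" "inS1 x1 x2 \<delta> M s" "inS1 x1 x2 \<delta> M r'" "inS1 x1 x2 \<delta> M s'"
  shows "dist1 x1 x2 \<delta> (opS U0 U1 r s) (opS U0 U1 r' s') \<le> (dist1 x1 x2 \<delta> r r' + dist1 x1 x2 \<delta> s s') / 4"
proof -
  let ?p = "\<lambda>\<eta> \<xi>. 2 * char_pow_integral 2 (-1) (U1 1) \<eta> \<xi> - 2 * char_pow_integral 3 (-1) (U0 2) \<eta> \<xi>"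
  have "dist1 x1 x2 \<delta> (opS U0 U1 r s) (opS U0 U1 r' s')
      = dist1 x1 x2 \<delta> (\<lambda>\<eta> \<xi>. 1 * char_div_integral (-1) (\<lambda>x t. (s x t - r x t) / 2) \<eta> \<xi> + ?p \<eta> \<xi>)
          (\<lambda>\<eta> \<xi>. 1 * char_div_integral (-1) (\<lambda>x t. (s' x t - r' x t) / 2) \<eta> \<xi> + ?p \<eta> \<xi>)"
    using opS_eq[where ?U0.0 = U0 and ?U1.0 = U1, OF _ assms(1,2) coefficients_continuous(2,3)]
      opS_eq[where ?U0.0 = U0 and ?U1.0 = U1, OF _ assms(3,4) coefficients_continuous(2,3)]
    by (intro dist1_cong) simp
  also have "\<dots> \<le> \<bar>1\<bar> * ((dist1 x1 x2 \<delta> s s' + dist1 x1 x2 \<delta> r r') / 2) / 2"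
    by (rule dist1_char_div_integral_le[OF _ inS1_half_diff[OF assms(2,1)] inS1_half_diff[OF assms(4,3)] Dom_nonempty])
       (use dist1_nonneg[OF assms(1,3) Dom_nonempty] dist1_nonneg[OF assms(2,4) Dom_nonempty]
          abs_half_diff_le_dist1[OF assms(2,1,4,3)] in auto)
  finally show ?thesis by simp
qed

lemma dist1_opW_le:
  assumes "inS1 x1 x2 \<delta> M r" "inS1 x1 x2 \<delta> M r'"
  shows "dist1 x1 x2 \<delta> (opW U1 r) (opW U1 r') \<le> \<delta>^2 * dist1 x1 x2 \<delta> r r'"
proof -
  have M_nonneg: "0 \<le> M" using K_nonneg M_ge by simp
  let ?p = "\<lambda>\<eta> \<xi>. - 2 * char_pow_integral 1 (-1) (U1 0) \<eta> \<xi>"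
  have "dist1 x1 x2 \<delta> (opW U1 r) (opW U1 r')
      = dist1 x1 x2 \<delta> (\<lambda>\<eta> \<xi>. -2 * char_div_integral (-1) (\<lambda>x t. t^2 * r x t) \<eta> \<xi> + ?p \<eta> \<xi>)
          (\<lambda>\<eta> \<xi>. -2 * char_div_integral (-1) (\<lambda>x t. t^2 * r' x t) \<eta> \<xi> + ?p \<eta> \<xi>)"
    using opW_eq[where ?U1.0 = U1, OF _ assms(1) M_nonneg coefficients_continuous(1)]
      opW_eq[where ?U1.0 = U1, OF _ assms(2) M_nonneg coefficients_continuous(1)]
    by (intro dist1_cong) simp
  also have "\<dots> \<le> \<bar>-2\<bar> * (\<delta>^2 * dist1 x1 x2 \<delta> r r') / 2"
  proof (rule dist1_char_div_integral_le[OF _ inS1_mult_t_sq[OF assms(1) M_nonneg] inS1_mult_t_sq[OF assms(2) M_nonneg] Dom_nonempty])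
    show "0 \<le> \<delta>^2 * dist1 x1 x2 \<delta> r r'"
      using dist1_nonneg[OF assms Dom_nonempty] by simp
    fix x t assume xt: "(x, t) \<in> Dom x1 x2 \<delta>"
    have "t^2 \<le> \<delta>^2" using xt by (auto simp: Dom_def intro!: power_mono)
    with abs_diff_le_dist1[OF assms xt] dist1_nonneg[OF assms Dom_nonempty]
    have "t^2 * \<bar>r x t - r' x t\<bar> \<le> \<delta>^2 * (dist1 x1 x2 \<delta> r r' * t^2)"
      by (intro mult_mono) auto
    then show "\<bar>t^2 * r x t - t^2 * r' x t\<bar> \<le> \<delta>^2 * dist1 x1 x2 \<delta> r r' * t^2"
      by (simp add: abs_mult mult.assoc flip: right_diff_distrib)
  qed simp
  finally show ?thesis by simp
qed

lemma dS_opT_le: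
  assumes "inS x1 x2 \<delta> M r s w" "inS x1 x2 \<delta> M r' s' w'"
  shows "dS x1 x2 \<delta> (opR U0 U1 r s, opS U0 U1 r s, opW U1 r) (opR U0 U1 r' s', opS U0 U1 r' s', opW U1 r')
    \<le> 3/4 * dS x1 x2 \<delta> (r, s, w) (r', s', w')"
proof -
  have S: "inS1 x1 x2 \<delta> M r" "inS1 x1 x2 \<delta> M s" "inS1 x1 x2 \<delta> M w"
    "inS1 x1 x2 \<delta> M r'" "inS1 x1 x2 \<delta> M s'" "inS1 x1 x2 \<delta> M w'"
    using assms by (simp_all add: inS_def)
  have "\<delta>^2 \<le> (1/2)^2" using \<delta>_pos \<delta>_le by (intro power_mono) auto
  then have "\<delta>^2 * dist1 x1 x2 \<delta> r r' \<le> 1/4 * dist1 x1 x2 \<delta> r r'"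
    using dist1_nonneg[OF S(1,4) Dom_nonempty] by (intro mult_right_mono) (auto simp: power2_eq_square)
  with dist1_opR_le[OF S(1,2,4,5)] dist1_opS_le[OF S(1,2,4,5)] dist1_opW_le[OF S(1,4)]
    dist1_nonneg[OF S(2,5) Dom_nonempty] dist1_nonneg[OF S(3,6) Dom_nonempty]
  show ?thesis
    by (simp add: dS_def)
qed

end

theorem lemmaA1:
  fixes x1 x2 K :: real
  assumes "x1 < x2"
  shows "\<exists>\<delta> M \<nu>. 0 < \<delta> \<and> \<delta> \<le> root 3 (3 * (x2 - x1) / 4) \<and> 0 < M \<and> 0 < \<nu> \<and> \<nu> < 1 \<and>
    (\<forall>U0 U1. Ck_on 4 x1 x2 U0 \<and> Ck_norm_le 4 x1 x2 U0 K \<and>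
              Ck_on 3 x1 x2 U1 \<and> Ck_norm_le 3 x1 x2 U1 K \<longrightarrow>
      (\<forall>r s w. inS x1 x2 \<delta> M r s w \<longrightarrow>
          inS x1 x2 \<delta> M (opR U0 U1 r s) (opS U0 U1 r s) (opW U1 r)) \<and>
      (\<forall>r s w r' s' w'. inS x1 x2 \<delta> M r s w \<longrightarrow> inS x1 x2 \<delta> M r' s' w' \<longrightarrow>
          dS x1 x2 \<delta> (opR U0 U1 r s, opS U0 U1 r s, opW U1 r)
                     (opR U0 U1 r' s', opS U0 U1 r' s', opW U1 r')
            \<le> \<nu> * dS x1 x2 \<delta> (r, s, w) (r', s', w')))"
proof -
  define \<delta> where "\<delta> = min (1/2) (root 3 (3 * (x2 - x1) / 4))"
  define M where "M = 2 * \<bar>K\<bar> + 1"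
  have \<delta>: "0 < \<delta>" "\<delta> \<le> 1/2" "\<delta> \<le> root 3 (3 * (x2 - x1) / 4)"
    using assms by (simp_all add: \<delta>_def)
  have "(\<forall>r s w. inS x1 x2 \<delta> M r s w \<longrightarrow> inS x1 x2 \<delta> M (opR U0 U1 r s) (opS U0 U1 r s) (opW U1 r)) \<and>
      (\<forall>r s w r' s' w'. inS x1 x2 \<delta> M r s w \<longrightarrow> inS x1 x2 \<delta> M r' s' w' \<longrightarrow>
          dS x1 x2 \<delta> (opR U0 U1 r s, opS U0 U1 r s, opW U1 r) (opR U0 U1 r' s', opS U0 U1 r' s', opW U1 r')
            \<le> 3/4 * dS x1 x2 \<delta> (r, s, w) (r', s', w'))"
    if U: "Ck_on 4 x1 x2 U0" "Ck_norm_le 4 x1 x2 U0 K" "Ck_on 3 x1 x2 U1" "Ck_norm_le 3 x1 x2 U1 K" for U0 U1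
  proof -
    have "\<bar>U1 0 x1\<bar> \<le> K"
      using U(4) assms by (simp add: Ck_norm_le_def)
    then have K: "0 \<le> K" "2 * K \<le> M"
      by (simp_all add: M_def)
    show ?thesis
      using inS_opT[OF _ \<delta>(1,2) K U] dS_opT_le[OF _ \<delta>(1,2) K U] assms by auto
  qed
  then show ?thesis
    using \<delta> by (intro exI[of _ \<delta>] exI[of _ M] exI[of _ "3/4"]) (auto simp: M_def)
qed

end
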